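(* For $x,y\in[0,1]$ let $$k(x,y)=\sum_{i\ge1}a_i\phi_i(x)\phi_i(y),\qquad c(x,y)=\sum_{m\ge1}b_m\psi_m(x)\psi_m(y),$$ where $a_i\ge0$, $b_m\ge0$, $\sum_ia_i<\infty$, $\sum_mb_m<\infty$, and $(\phi_i)_i$, $(\psi_m)_m$ are orthonormal bases of $L^2([0,1])$. Let $T$ be the integral operator $Tf=\int_0^1k(\cdot,x)f(x)\,dx$ on $L^2([0,1])$, and let $C$ be the covariance operator of a mean-zero Gaussian process $X$ on $[0,1]$ with covariance function $c$. Define $\theta_{mi}:=\langle\psi_m,\phi_i\rangle$, $\eta_{ij}:=\sum_{m\ge1}b_m\theta_{mi}\theta_{mj}$, $\tau_j:=\sum_ia_i\eta_{ij}^2$, and assume $\sup_j\tau_j<\infty$. Then: (i) the RKHS induced by $k$ is $\mathcal{H}=\{f=\sum_{i\ge1}f_i\phi_i:\sum_if_i^2/a_i<\infty\}$ with inner product $\langle f,g\rangle_{\mathcal{H}}=\sum_ia_i^{-1}f_ig_i$; (ii) $\mathscr{R}\big(T^{1/2}(T^{1/2}CT^{1/2})\big)\subset\tilde{\mathcal{H}}\subset\mathcal{H}$, where $\tilde{\mathcal{H}}=\{f=\sum_if_i\phi_i:\sum_i f_i^2/(a_i\tau_i)<\infty\}$ is the RKHS induced by the kernel $\tilde k(x,y)=\sum_{i\ge1}a_i\tau_i\phi_i(x)\phi_i(y)$, with inner product $\langle f,g\rangle_{\tilde{\mathcal{H}}}=\sum_{i\ge1}f_ig_i(\tau_ia_i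)^{-1}$.
   Context: $\mathscr{R}(A)$ denotes the range of an operator $A$; fractional powers of positive self-adjoint operators are defined by functional calculus. The covariance operator is $C=\mathbb{E}[X\otimes X]$ on $L^2([0,1])$. *)

theory Defs
  imports "HOL-Analysis.Analysis"
begin

definition L2I :: "(real \<Rightarrow> real) set" where
  "L2I = {f. set_borel_measurable lborel {0..1} f \<and>
             set_integrable lborel {0..1} (\<lambda>x. (f x)^2)}"

definition l2_ip :: "(real \<Rightarrow> real) \<Rightarrow> (real \<Rightarrow> real) \<Rightarrow> real" where
  "l2_ip f g = (LINT x:{0..1}|lborel. f x * g x)"

definition l2_eq :: "(real \<Rightarrow> real) \<Rightarrow> (real \<Rightarrow> real) \<Rightarrow> bool" where
  "l2_eq f g \<longleftrightarrow> (AE x in lborel. x \<in> {0..1} \<longrightarrow> f x = g x)"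

definition orthonormal_basis_L2 :: "(nat \<Rightarrow> real \<Rightarrow> real) \<Rightarrow> bool" where
  "orthonormal_basis_L2 \<phi> \<longleftrightarrow>
     (\<forall>i. \<phi> i \<in> L2I) \<and>
     (\<forall>i j. l2_ip (\<phi> i) (\<phi> j) = (if i = j then 1 else 0)) \<and>
     (\<forall>f\<in>L2I. (\<forall>i. l2_ip f (\<phi> i) = 0) \<longrightarrow> l2_eq f (\<lambda>_. 0))"

text \<open>Bounded linear operators on L2([0,1]), represented by maps on representatives
  that respect a.e. equality.\<close>
definition l2_operator :: "((real \<Rightarrow> real) \<Rightarrow> (real \<Rightarrow> real)) \<Rightarrow> bool" where
  "l2_operator A \<longleftrightarrow>
     (\<forall>f\<in>L2I. A f \<in> L2I) \<and>
     (\<forall>f\<in>L2I. \<forall>g\<in>L2I. l2_eq f g \<longrightarrow> l2_eq (A f) (A g)) \<and>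
     (\<forall>f\<in>L2I. \<forall>g\<in>L2I. \<forall>a b.
        l2_eq (A (\<lambda>x. a * f x + b * g x)) (\<lambda>x. a * A f x + b * A g x)) \<and>
     (\<exists>K. \<forall>f\<in>L2I. l2_ip (A f) (A f) \<le> K * l2_ip f f)"

text \<open>S is the (positive self-adjoint) square root A^(1/2) of A; by uniqueness of the
  positive square root this is the operator given by the functional calculus.\<close>
definition l2_sqrt_of :: "((real \<Rightarrow> real) \<Rightarrow> (real \<Rightarrow> real)) \<Rightarrow>
    ((real \<Rightarrow> real) \<Rightarrow> (real \<Rightarrow> real)) \<Rightarrow> bool" where
  "l2_sqrt_of A S \<longleftrightarrow>
     l2_operator S \<and>
     (\<forall>f\<in>L2I. \<forall>g\<in>L2I. l2_ip (S f) g = l2_ip f (S g)) \<and>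
     (\<forall>f\<in>L2I. 0 \<le> l2_ip (S f) f) \<and>
     (\<forall>f\<in>L2I. l2_eq (S (S f)) (A f))"

definition l2_sqrt :: "((real \<Rightarrow> real) \<Rightarrow> (real \<Rightarrow> real)) \<Rightarrow> ((real \<Rightarrow> real) \<Rightarrow> (real \<Rightarrow> real))" where
  "l2_sqrt A = (SOME S. l2_sqrt_of A S)"

text \<open>The range of an operator on L2 is contained in a set H of functions:
  every element of the range has a representative in H.\<close>
definition l2_range_subset :: "((real \<Rightarrow> real) \<Rightarrow> (real \<Rightarrow> real)) \<Rightarrow> (real \<Rightarrow> real) set \<Rightarrow> bool" where
  "l2_range_subset A H \<longleftrightarrow> (\<forall>f\<in>L2I. \<exists>h\<in>H. l2_eq (A f) h)"

definition mercer_kernel :: "(nat \<Rightarrow> real) \<Rightarrow> (nat \<Rightarrow> real \<Rightarrow> real) \<Rightarrow> real \<Rightarrow> real \<Rightarrow> real" where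
  "mercer_kernel w \<phi> = (\<lambda>x y. \<Sum>i. w i * \<phi> i x * \<phi> i y)"

definition integral_op :: "(real \<Rightarrow> real \<Rightarrow> real) \<Rightarrow> (real \<Rightarrow> real) \<Rightarrow> real \<Rightarrow> real" where
  "integral_op K f = (\<lambda>x. LINT y:{0..1}|lborel. K x y * f y)"

text \<open>Covariance operator C = E[X (x) X] of a centred process X on [0,1] with covariance
  function c: (C f)(x) = E[X(x) <X,f>] = int_0^1 c(x,y) f(y) dy.\<close>
definition cov_op :: "(real \<Rightarrow> real \<Rightarrow> real) \<Rightarrow> (real \<Rightarrow> real) \<Rightarrow> real \<Rightarrow> real" where
  "cov_op c = integral_op c"

definition theta :: "(nat \<Rightarrow> real \<Rightarrow> real) \<Rightarrow> (nat \<Rightarrow> real \<Rightarrow> real) \<Rightarrow> nat \<Rightarrow> nat \<Rightarrow> real" where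
  "theta \<psi> \<phi> m i = l2_ip (\<psi> m) (\<phi> i)"

definition eta :: "(nat \<Rightarrow> real) \<Rightarrow> (nat \<Rightarrow> real \<Rightarrow> real) \<Rightarrow> (nat \<Rightarrow> real \<Rightarrow> real) \<Rightarrow> nat \<Rightarrow> nat \<Rightarrow> real" where
  "eta b \<psi> \<phi> i j = (\<Sum>m. b m * theta \<psi> \<phi> m i * theta \<psi> \<phi> m j)"

definition tau :: "(nat \<Rightarrow> real) \<Rightarrow> (nat \<Rightarrow> real) \<Rightarrow> (nat \<Rightarrow> real \<Rightarrow> real) \<Rightarrow> (nat \<Rightarrow> real \<Rightarrow> real) \<Rightarrow> nat \<Rightarrow> real" where
  "tau a b \<psi> \<phi> j = (\<Sum>i. a i * (eta b \<psi> \<phi> i j)^2)"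

text \<open>Functions on X are represented as functions on the reals vanishing outside X.\<close>
definition kernel_section :: "real set \<Rightarrow> (real \<Rightarrow> real \<Rightarrow> real) \<Rightarrow> real \<Rightarrow> real \<Rightarrow> real" where
  "kernel_section X K x = (\<lambda>y. if y \<in> X then K y x else 0)"

definition is_rkhs :: "real set \<Rightarrow> (real \<Rightarrow> real \<Rightarrow> real) \<Rightarrow> (real \<Rightarrow> real) set \<Rightarrow>
    ((real \<Rightarrow> real) \<Rightarrow> (real \<Rightarrow> real) \<Rightarrow> real) \<Rightarrow> bool" where
  "is_rkhs X K H ip \<longleftrightarrow>
     (\<forall>f\<in>H. \<forall>x. x \<notin> X \<longrightarrow> f x = 0) \<and>
     (\<lambda>_. 0) \<in> H \<and>
     (\<forall>f\<in>H. \<forall>g\<in>H. \<forall>a b. (\<lambda>x. a * f x + b * g x) \<in> H) \<and>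
     (\<forall>f\<in>H. \<forall>g\<in>H. ip f g = ip g f) \<and>
     (\<forall>f\<in>H. \<forall>g\<in>H. \<forall>h\<in>H. \<forall>a b.
        ip (\<lambda>x. a * f x + b * g x) h = a * ip f h + b * ip g h) \<and>
     (\<forall>f\<in>H. 0 \<le> ip f f \<and> (ip f f = 0 \<longrightarrow> f = (\<lambda>_. 0))) \<and>
     (\<forall>u. (\<forall>n. u n \<in> H) \<and>
          (\<forall>e>0. \<exists>N. \<forall>m\<ge>N. \<forall>n\<ge>N. ip (\<lambda>x. u m x - u n x) (\<lambda>x. u m x - u n x) < e) \<longrightarrow>
          (\<exists>f\<in>H. (\<lambda>n. ip (\<lambda>x. u n x - f x) (\<lambda>x. u n x - f x)) \<longlonglongrightarrow> 0)) \<and>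
     (\<forall>x\<in>X. kernel_section X K x \<in> H \<and> (\<forall>f\<in>H. ip f (kernel_section X K x) = f x))"

definition coef_space :: "(nat \<Rightarrow> real \<Rightarrow> real) \<Rightarrow> (nat \<Rightarrow> real) \<Rightarrow> (real \<Rightarrow> real) set" where
  "coef_space \<phi> w = {f. \<exists>F. (\<forall>i. w i = 0 \<longrightarrow> F i = 0) \<and>
       summable (\<lambda>i. (F i)^2 / w i) \<and>
       (\<forall>x\<in>{0..1}. (\<lambda>i. F i * \<phi> i x) sums f x) \<and>
       (\<forall>x. x \<notin> {0..1} \<longrightarrow> f x = 0)}"

definition coef_ip :: "(nat \<Rightarrow> real \<Rightarrow> real) \<Rightarrow> (nat \<Rightarrow> real) \<Rightarrow>
    (real \<Rightarrow> real) \<Rightarrow> (real \<Rightarrow> real) \<Rightarrow> real" where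
  "coef_ip \<phi> w f g = (\<Sum>i. l2_ip f (\<phi> i) * l2_ip g (\<phi> i) / w i)"

end

theory Submission
  imports Defs
begin

text \<open>
  Both spaces are images of weighted sequence spaces under \<open>c \<mapsto> \<Sum>\<^sub>i c\<^sub>i \<phi>\<^sub>i\<close>,
  which is isometric for the coefficient inner products, so the RKHS axioms reduce to facts
  about weighted \<open>\<ell>\<^sup>2\<close>. For the range inclusion let \<open>S\<close> be any positive square root of \<open>T\<close>.
  For a finite combination \<open>v = \<Sum>\<^sub>j\<^sub><\<^sub>N d\<^sub>j \<phi>\<^sub>j\<close> we get
  \<open>\<langle>S f, v\<rangle>\<^sup>2 = \<langle>f, S v\<rangle>\<^sup>2 \<le> \<parallel>f\<parallel>\<^sup>2 \<langle>T v, v\<rangle> = \<parallel>f\<parallel>\<^sup>2 \<Sum>\<^sub>j\<^sub><\<^sub>N a\<^sub>j d\<^sub>j\<^sup>2\<close>, so by duality the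
  coefficients \<open>u\<^sub>j\<close> of \<open>u = S f\<close> satisfy \<open>\<Sum>\<^sub>j u\<^sub>j\<^sup>2 / a\<^sub>j < \<infinity>\<close>. The \<open>i\<close>-th coefficient
  of \<open>C u\<close> is \<open>\<Sum>\<^sub>j u\<^sub>j \<eta>\<^sub>i\<^sub>j\<close>, whose square is at most \<open>(\<Sum>\<^sub>j u\<^sub>j\<^sup>2 / a\<^sub>j) \<tau>\<^sub>i\<close> by
  Cauchy-Schwarz. Since \<open>S (S g) = T g\<close> has coefficients \<open>a\<^sub>i \<langle>g, \<phi>\<^sub>i\<rangle>\<close>, the range lies in
  the space with weights \<open>a\<^sub>i \<tau>\<^sub>i\<close>; boundedness of \<open>\<tau>\<close> makes that space a subspace of
  the first one and makes \<open>\<Sum>\<^sub>i a\<^sub>i \<tau>\<^sub>i\<close> finite.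
\<close>

section \<open>The space L2([0,1])\<close>

abbreviation lborel_01 :: "real measure" where
  "lborel_01 \<equiv> restrict_space lborel {0..1}"

lemma space_lborel_01 [simp]: "space lborel_01 = {0..1}"
  by (simp add: space_restrict_space)

lemma L2I_iff: "f \<in> L2I \<longleftrightarrow> f \<in> borel_measurable lborel_01 \<and> integrable lborel_01 (\<lambda>x. (f x)^2)"
  unfolding L2I_def set_borel_measurable_def
  by (simp add: borel_measurable_restrict_space_iff set_integrable_eq)

lemma l2_ip_integral: "l2_ip f g = (\<integral>x. f x * g x \<partial>lborel_01)"
  unfolding l2_ip_def set_lebesgue_integral_def by (simp add: integral_restrict_space)

lemma l2_eq_AE_iff: "l2_eq f g \<longleftrightarrow> (AE x in lborel_01. f x = g x)"
  unfolding l2_eq_def by (simp add: AE_restrict_space_iff)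

lemma l2_eq_trans_on:
  assumes "l2_eq f g" and "\<And>x. x \<in> {0..1} \<Longrightarrow> g x = h x"
  shows "l2_eq f h"
  using assms unfolding l2_eq_def by (auto elim!: eventually_mono)

lemma L2I_measurable: "f \<in> L2I \<Longrightarrow> f \<in> borel_measurable lborel_01"
  and L2I_square_integrable: "f \<in> L2I \<Longrightarrow> integrable lborel_01 (\<lambda>x. (f x)^2)"
  by (simp_all add: L2I_iff)

lemma L2I_cong:
  assumes "f \<in> L2I" and "\<And>x. x \<in> {0..1} \<Longrightarrow> f x = g x"
  shows "g \<in> L2I"
proof -
  have "g \<in> borel_measurable lborel_01"
    using L2I_measurable[OF assms(1)] by (rule measurable_cong[THEN iffD1, rotated]) (use assms(2) in auto)
  moreover have "integrable lborel_01 (\<lambda>x. (g x)^2) = integrable lborel_01 (\<lambda>x. (f x)^2)"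
    by (rule Bochner_Integration.integrable_cong[OF refl]) (simp add: assms(2))
  ultimately show ?thesis using L2I_square_integrable[OF assms(1)] by (simp add: L2I_iff)
qed

lemma abs_mult_le_half_sum_squares: "\<bar>x * y\<bar> \<le> (x^2 + y^2) / 2" for x y :: real
  using sum_squares_bound[of "\<bar>x\<bar>" "\<bar>y\<bar>"] by (simp add: abs_mult)

lemma integrable_mult_L2I:
  assumes "f \<in> L2I" "g \<in> L2I"
  shows "integrable lborel_01 (\<lambda>x. f x * g x)"
proof (rule Bochner_Integration.integrable_bound)
  show "integrable lborel_01 (\<lambda>x. ((f x)^2 + (g x)^2) / 2)"
    using assms by (intro integrable_divide_zero Bochner_Integration.integrable_add)
      (auto dest: L2I_square_integrable)
  show "(\<lambda>x. f x * g x) \<in> borel_measurable lborel_01"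
    using assms by (intro borel_measurable_times) (auto dest: L2I_measurable)
  show "AE x in lborel_01. norm (f x * g x) \<le> norm (((f x)^2 + (g x)^2) / 2)"
    using abs_mult_le_half_sum_squares by auto
qed

lemma L2I_lin:
  assumes "f \<in> L2I" "g \<in> L2I"
  shows "(\<lambda>x. a * f x + b * g x) \<in> L2I"
proof -
  have [measurable]: "f \<in> borel_measurable lborel_01" "g \<in> borel_measurable lborel_01"
    using assms by (auto dest: L2I_measurable)
  have "(\<lambda>x. (a * f x + b * g x)^2) = (\<lambda>x. a^2 * (f x)^2 + b^2 * (g x)^2 + (2*a*b) * (f x * g x))"
    by (auto simp: power2_eq_square algebra_simps)
  then have "integrable lborel_01 (\<lambda>x. (a * f x + b * g x)^2)"
    using assms integrable_mult_L2I[OF assms] by (auto dest!: L2I_square_integrable)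
  then show ?thesis by (simp add: L2I_iff)
qed

lemma L2I_zero: "(\<lambda>_. 0) \<in> L2I"
  by (simp add: L2I_iff)

lemma L2I_diff: "f \<in> L2I \<Longrightarrow> g \<in> L2I \<Longrightarrow> (\<lambda>x. f x - g x) \<in> L2I"
  using L2I_lin[of f g 1 "-1"] by simp

lemma L2I_sum: "(\<And>j. j \<in> J \<Longrightarrow> e j \<in> L2I) \<Longrightarrow> (\<lambda>x. \<Sum>j\<in>J. c j * e j x) \<in> L2I"
proof (induction J rule: infinite_finite_induct)
  case (insert j J)
  then have "(\<lambda>x. c j * e j x + 1 * (\<Sum>j\<in>J. c j * e j x)) \<in> L2I"
    by (intro L2I_lin) auto
  with insert show ?case by simp
qed (auto simp: L2I_zero)

lemma l2_ip_commute: "l2_ip f g = l2_ip g f"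
  by (simp add: l2_ip_integral mult.commute)

lemma l2_ip_lin:
  assumes "f \<in> L2I" "g \<in> L2I" "h \<in> L2I"
  shows "l2_ip (\<lambda>x. a * f x + b * g x) h = a * l2_ip f h + b * l2_ip g h"
proof -
  have "l2_ip (\<lambda>x. a * f x + b * g x) h = (\<integral>x. a * (f x * h x) + b * (g x * h x) \<partial>lborel_01)"
    by (simp add: l2_ip_integral algebra_simps)
  also have "\<dots> = a * l2_ip f h + b * l2_ip g h"
    using integrable_mult_L2I[OF assms(1,3)] integrable_mult_L2I[OF assms(2,3)]
    by (simp add: l2_ip_integral)
  finally show ?thesis .
qed

lemma l2_ip_diff: "f \<in> L2I \<Longrightarrow> g \<in> L2I \<Longrightarrow> h \<in> L2I \<Longrightarrow> l2_ip (\<lambda>x. f x - g x) h = l2_ip f h - l2_ip g h"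
  using l2_ip_lin[of f g h 1 "-1"] by simp

lemma l2_ip_sum:
  assumes "\<And>j. j \<in> J \<Longrightarrow> e j \<in> L2I" "h \<in> L2I"
  shows "l2_ip (\<lambda>x. \<Sum>j\<in>J. c j * e j x) h = (\<Sum>j\<in>J. c j * l2_ip (e j) h)"
proof -
  have "l2_ip (\<lambda>x. \<Sum>j\<in>J. c j * e j x) h = (\<integral>x. (\<Sum>j\<in>J. c j * (e j x * h x)) \<partial>lborel_01)"
    by (simp add: l2_ip_integral sum_distrib_right mult.assoc)
  also have "\<dots> = (\<Sum>j\<in>J. c j * l2_ip (e j) h)"
    using assms by (subst Bochner_Integration.integral_sum) (auto intro: integrable_mult_L2I simp: l2_ip_integral)
  finally show ?thesis .
qed

lemma l2_ip_cong: "(\<And>x. x \<in> {0..1} \<Longrightarrow> f x = f' x) \<Longrightarrow> l2_ip f g = l2_ip f' g"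
  unfolding l2_ip_integral by (rule Bochner_Integration.integral_cong) simp_all

lemma l2_ip_cong_AE:
  assumes "l2_eq f f'" "f \<in> L2I" "f' \<in> L2I" "g \<in> L2I"
  shows "l2_ip f g = l2_ip f' g"
  unfolding l2_ip_integral
proof (rule integral_cong_AE)
  show "(\<lambda>x. f x * g x) \<in> borel_measurable lborel_01" "(\<lambda>x. f' x * g x) \<in> borel_measurable lborel_01"
    using integrable_mult_L2I assms by blast+
  show "AE x in lborel_01. f x * g x = f' x * g x"
    using assms(1) unfolding l2_eq_AE_iff by auto
qed

lemma l2_ip_self_nonneg: "0 \<le> l2_ip f f"
  unfolding l2_ip_integral by (intro integral_nonneg_AE) auto

lemma l2_Cauchy_Schwarz:
  assumes f: "f \<in> L2I" and g: "g \<in> L2I"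
  shows "(l2_ip f g)^2 \<le> l2_ip f f * l2_ip g g"
proof -
  define A B C where "A = l2_ip f f" and "B = l2_ip f g" and "C = l2_ip g g"
  have quadratic: "0 \<le> A - 2 * t * B + t^2 * C" for t
  proof -
    define D where "D = (\<lambda>x. 1 * f x + (-t) * g x)"
    have D: "D \<in> L2I" unfolding D_def using f g by (rule L2I_lin)
    have "l2_ip D D = l2_ip f D - t * l2_ip g D"
      using l2_ip_lin[OF f g D, of 1 "-t"] by (simp add: D_def)
    moreover have "l2_ip f D = A - t * B" "l2_ip g D = B - t * C"
      using l2_ip_lin[OF f g f, of 1 "-t"] l2_ip_lin[OF f g g, of 1 "-t"]
      by (simp_all add: D_def A_def B_def C_def l2_ip_commute)
    ultimately have "l2_ip D D = A - 2 * t * B + t^2 * C"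
      by (simp add: power2_eq_square algebra_simps)
    then show ?thesis using l2_ip_self_nonneg[of D] by simp
  qed
  show ?thesis
  proof (cases "C = 0")
    case True
    then have "B = 0"
      using quadratic[of "(A + 1) / (2 * B)"] by (cases "B = 0") auto
    then show ?thesis using True by (simp add: B_def C_def)
  next
    case False
    then have "C > 0" using l2_ip_self_nonneg[of g] by (simp add: C_def)
    have "0 \<le> A - 2 * (B/C) * B + (B/C)^2 * C" by (rule quadratic)
    also have "\<dots> = A - B^2 / C" using \<open>C > 0\<close> by (simp add: power2_eq_square field_simps)
    finally show ?thesis using \<open>C > 0\<close> by (simp add: A_def B_def C_def pos_divide_le_eq)
  qed
qed

lemma integral_abs_mult_le:
  assumes "f \<in> L2I" "g \<in> L2I"
  shows "(\<integral>x. \<bar>f x * g x\<bar> \<partial>lborel_01) \<le> (l2_ip f f + l2_ip g g) / 2"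
proof -
  have "(\<integral>x. \<bar>f x * g x\<bar> \<partial>lborel_01) \<le> (\<integral>x. ((f x)^2 + (g x)^2) / 2 \<partial>lborel_01)"
    using assms abs_mult_le_half_sum_squares integrable_mult_L2I[OF assms]
    by (intro integral_mono integrable_divide_zero Bochner_Integration.integrable_add)
      (auto dest: L2I_square_integrable)
  also have "\<dots> = (l2_ip f f + l2_ip g g) / 2"
    using assms by (auto dest!: L2I_square_integrable simp: l2_ip_integral power2_eq_square)
  finally show ?thesis .
qed

lemma l2_sqrt_ofD:
  assumes "l2_sqrt_of A S"
  shows "f \<in> L2I \<Longrightarrow> S f \<in> L2I"
    and "f \<in> L2I \<Longrightarrow> g \<in> L2I \<Longrightarrow> l2_ip (S f) g = l2_ip f (S g)"
    and "f \<in> L2I \<Longrightarrow> l2_eq (S (S f)) (A f)"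
  using assms unfolding l2_sqrt_of_def l2_operator_def by blast+

section \<open>Weighted square-summable sequences\<close>

lemma summable_abs_mult_of_squares:
  fixes p q :: "nat \<Rightarrow> real"
  assumes "summable (\<lambda>n. (p n)^2)" "summable (\<lambda>n. (q n)^2)"
  shows "summable (\<lambda>n. \<bar>p n * q n\<bar>)"
proof (rule summable_comparison_test)
  show "summable (\<lambda>n. ((p n)^2 + (q n)^2) / 2)"
    using assms by (intro summable_divide summable_add)
qed (use abs_mult_le_half_sum_squares in auto)

lemma suminf_mult_square_le:
  fixes p q :: "nat \<Rightarrow> real"
  assumes p: "summable (\<lambda>n. (p n)^2)" and q: "summable (\<lambda>n. (q n)^2)"
  shows "(\<Sum>n. p n * q n)^2 \<le> (\<Sum>n. (p n)^2) * (\<Sum>n. (q n)^2)"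
proof (rule LIMSEQ_le)
  have "summable (\<lambda>n. p n * q n)"
    using summable_abs_mult_of_squares[OF p q] by (rule summable_rabs_cancel)
  then show "(\<lambda>N. (\<Sum>n<N. p n * q n)^2) \<longlonglongrightarrow> (\<Sum>n. p n * q n)^2"
    by (intro tendsto_power summable_LIMSEQ)
  show "(\<lambda>N. (\<Sum>n<N. (p n)^2) * (\<Sum>n<N. (q n)^2)) \<longlonglongrightarrow> (\<Sum>n. (p n)^2) * (\<Sum>n. (q n)^2)"
    using p q by (intro tendsto_mult summable_LIMSEQ)
  show "\<exists>N. \<forall>n\<ge>N. (\<Sum>i<n. p i * q i)^2 \<le> (\<Sum>i<n. (p i)^2) * (\<Sum>i<n. (q i)^2)"
    by (auto intro: Cauchy_Schwarz_ineq_sum)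
qed

text \<open>Since \<open>x / 0 = 0\<close>, the series ignores indices of weight zero; there the
  coefficients are required to vanish explicitly.\<close>
definition weighted_l2 :: "(nat \<Rightarrow> real) \<Rightarrow> (nat \<Rightarrow> real) set" where
  "weighted_l2 w = {c. (\<forall>n. w n = 0 \<longrightarrow> c n = 0) \<and> summable (\<lambda>n. (c n)^2 / w n)}"

lemma weighted_l2I: "(\<And>n. w n = 0 \<Longrightarrow> c n = 0) \<Longrightarrow> summable (\<lambda>n. (c n)^2 / w n) \<Longrightarrow> c \<in> weighted_l2 w"
  by (simp add: weighted_l2_def)

lemma weighted_l2_zero: "c \<in> weighted_l2 w \<Longrightarrow> w n = 0 \<Longrightarrow> c n = 0"
  and weighted_l2_summable: "c \<in> weighted_l2 w \<Longrightarrow> summable (\<lambda>n. (c n)^2 / w n)"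
  by (simp_all add: weighted_l2_def)

lemma weighted_Cauchy_Schwarz:
  assumes w: "\<And>n. 0 \<le> w n" and c: "c \<in> weighted_l2 w" and d: "summable (\<lambda>n. w n * (d n)^2)"
  shows "summable (\<lambda>n. \<bar>c n * d n\<bar>)"
    and "(\<Sum>n. c n * d n)^2 \<le> (\<Sum>n. (c n)^2 / w n) * (\<Sum>n. w n * (d n)^2)"
proof -
  define p q where "p n = c n / sqrt (w n)" and "q n = sqrt (w n) * d n" for n
  have pq: "p n * q n = c n * d n" for n
    using w[of n] weighted_l2_zero[OF c, of n] by (cases "w n = 0") (auto simp: p_def q_def)
  have p2: "(p n)^2 = (c n)^2 / w n" and q2: "(q n)^2 = w n * (d n)^2" for n
    using w[of n] by (simp_all add: p_def q_def power_divide power_mult_distrib)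
  have "summable (\<lambda>n. (p n)^2)" "summable (\<lambda>n. (q n)^2)"
    using weighted_l2_summable[OF c] d by (simp_all add: p2 q2)
  from summable_abs_mult_of_squares[OF this] suminf_mult_square_le[OF this]
  show "summable (\<lambda>n. \<bar>c n * d n\<bar>)"
    and "(\<Sum>n. c n * d n)^2 \<le> (\<Sum>n. (c n)^2 / w n) * (\<Sum>n. w n * (d n)^2)"
    by (simp_all add: pq p2 q2)
qed

lemma summable_weighted_mult:
  assumes w: "\<And>n. 0 \<le> w n" and c: "c \<in> weighted_l2 w" and d: "d \<in> weighted_l2 w"
  shows "summable (\<lambda>n. c n * d n / w n)"
proof -
  have "w n * (d n / w n)^2 = (d n)^2 / w n" for n
    by (cases "w n = 0") (auto simp: power2_eq_square)
  then have "summable (\<lambda>n. w n * (d n / w n)^2)"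
    using weighted_l2_summable[OF d] by simp
  from summable_rabs_cancel[OF weighted_Cauchy_Schwarz(1)[OF w c this]] show ?thesis
    by simp
qed

lemma weighted_l2_lin:
  assumes w: "\<And>n. 0 \<le> w n" and c: "c \<in> weighted_l2 w" and d: "d \<in> weighted_l2 w"
  shows "(\<lambda>n. a * c n + b * d n) \<in> weighted_l2 w"
proof (rule weighted_l2I)
  have "(\<lambda>n. (a * c n + b * d n)^2 / w n)
      = (\<lambda>n. a^2 * ((c n)^2 / w n) + b^2 * ((d n)^2 / w n) + (2*a*b) * (c n * d n / w n))"
    by (simp add: power2_eq_square field_simps add_divide_distrib)
  then show "summable (\<lambda>n. (a * c n + b * d n)^2 / w n)"
    using summable_weighted_mult[OF w c d] weighted_l2_summable[OF c] weighted_l2_summable[OF d]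
    by (simp only:) (intro summable_add summable_mult)
qed (simp add: weighted_l2_zero[OF c] weighted_l2_zero[OF d])

lemma weighted_l2_mult_weight_iff: "(\<lambda>n. w n * d n) \<in> weighted_l2 w \<longleftrightarrow> summable (\<lambda>n. w n * (d n)^2)"
proof -
  have "(w n * d n)^2 / w n = w n * (d n)^2" for n
    by (cases "w n = 0") (auto simp: power2_eq_square)
  then show ?thesis by (simp add: weighted_l2_def)
qed

lemma weighted_l2_sqrt_mult:
  assumes w: "\<And>n. 0 \<le> w n" and d: "summable (\<lambda>n. (d n)^2)"
  shows "(\<lambda>n. sqrt (w n) * d n) \<in> weighted_l2 w"
proof (rule weighted_l2I)
  show "summable (\<lambda>n. (sqrt (w n) * d n)^2 / w n)"
  proof (rule summable_comparison_test[OF _ d])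
    show "\<exists>N. \<forall>n\<ge>N. norm ((sqrt (w n) * d n)^2 / w n) \<le> (d n)^2"
      using w by (auto simp: power_mult_distrib)
  qed
qed simp

lemma weighted_l2_mono:
  assumes v: "\<And>n. 0 \<le> v n" and w: "\<And>n. 0 \<le> w n" and vw: "\<And>n. v n \<le> K * w n"
  shows "weighted_l2 v \<subseteq> weighted_l2 w"
proof
  fix c assume c: "c \<in> weighted_l2 v"
  have le: "(c n)^2 / w n \<le> K * ((c n)^2 / v n)" for n
  proof (cases "v n = 0")
    case False
    then have "0 < v n" "0 < K * w n" using v[of n] vw[of n] by linarith+
    then have "0 < w n" "0 < K" using w[of n] by (auto simp: zero_less_mult_iff)
    have "(c n)^2 * v n \<le> (c n)^2 * (K * w n)" by (intro mult_left_mono vw) simp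
    with \<open>0 < v n\<close> \<open>0 < w n\<close> show ?thesis by (simp add: field_simps)
  qed (simp add: weighted_l2_zero[OF c])
  show "c \<in> weighted_l2 w"
  proof (rule weighted_l2I)
    show "w n = 0 \<Longrightarrow> c n = 0" for n
      using vw[of n] v[of n] weighted_l2_zero[OF c, of n] by simp
    show "summable (\<lambda>n. (c n)^2 / w n)"
      by (rule summable_comparison_test[OF _ summable_mult[OF weighted_l2_summable[OF c]]])
        (use le w in auto)
  qed
qed

lemma weighted_l2_mult_weight_bounded:
  assumes w: "\<And>n. 0 \<le> w n" "summable w" and t: "\<And>n. 0 \<le> t n"
    and g: "\<And>n. (g n)^2 \<le> K * t n"
  shows "(\<lambda>n. w n * g n) \<in> weighted_l2 (\<lambda>n. w n * t n)"
proof (rule weighted_l2I)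
  show "w n * t n = 0 \<Longrightarrow> w n * g n = 0" for n
    using g[of n] by auto
  have le: "(w n * g n)^2 / (w n * t n) \<le> \<bar>K\<bar> * w n" for n
  proof (cases "w n * t n = 0")
    case False
    then have "0 < w n" "0 < t n" using w(1)[of n] t[of n] by (auto simp: less_le)
    have "(w n * g n)^2 / (w n * t n) = w n * ((g n)^2 / t n)"
      using \<open>0 < w n\<close> by (simp add: power2_eq_square)
    also have "\<dots> \<le> w n * \<bar>K\<bar>"
    proof (intro mult_left_mono)
      have "(g n)^2 \<le> \<bar>K\<bar> * t n"
        using g[of n] mult_right_mono[OF abs_ge_self, of "t n" K] t[of n] by linarith
      then show "(g n)^2 / t n \<le> \<bar>K\<bar>" using \<open>0 < t n\<close> by (simp add: divide_le_eq)
    qed (use \<open>0 < w n\<close> in simp)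
    finally show ?thesis by (simp add: mult.commute)
  qed (use w(1)[of n] in auto)
  show "summable (\<lambda>n. (w n * g n)^2 / (w n * t n))"
  proof (rule summable_comparison_test'[OF summable_mult[OF w(2), of "\<bar>K\<bar>"]])
    show "norm ((w n * g n)^2 / (w n * t n)) \<le> \<bar>K\<bar> * w n" for n
      using le[of n] w(1)[of n] t[of n] by simp
  qed
qed

lemma weighted_l2_of_partial_sums_bound:
  assumes w: "\<And>n. 0 \<le> w n"
    and bound: "\<And>N d. (\<Sum>j<N. d j * u j)^2 \<le> K * (\<Sum>j<N. w j * (d j)^2)"
  shows "u \<in> weighted_l2 w"
proof (rule weighted_l2I)
  show "u j = 0" if "w j = 0" for j
    using bound[where N="Suc j" and d="\<lambda>i. if i = j then 1 else 0"] that
    by (simp add: if_distrib cong: if_cong)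
  have partial: "(\<Sum>j<N. (u j)^2 / w j) \<le> \<bar>K\<bar>" for N
  proof -
    define X where "X = (\<Sum>j<N. (u j)^2 / w j)"
    have "(\<Sum>j<N. u j / w j * u j) = X" "(\<Sum>j<N. w j * (u j / w j)^2) = X"
      unfolding X_def by (auto simp: power2_eq_square intro: sum.cong)
    then have "X^2 \<le> K * X"
      using bound[where N=N and d="\<lambda>j. u j / w j"] by simp
    moreover have "0 \<le> X" unfolding X_def using w by (intro sum_nonneg) auto
    ultimately have "X \<le> K \<or> X = 0"
      by (cases "X = 0") (auto simp: power2_eq_square)
    then show ?thesis unfolding X_def[symmetric] by auto
  qed
  show "summable (\<lambda>j. (u j)^2 / w j)"
    by (rule summableI_nonneg_bounded[OF _ partial]) (use w in auto)
qed

lemma weighted_l2_diff: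
  "(\<And>n. 0 \<le> w n) \<Longrightarrow> c \<in> weighted_l2 w \<Longrightarrow> d \<in> weighted_l2 w \<Longrightarrow> (\<lambda>n. c n - d n) \<in> weighted_l2 w"
  using weighted_l2_lin[of w c d 1 "-1"] by simp

lemma weighted_l2_term_le:
  "(\<And>n. 0 \<le> w n) \<Longrightarrow> c \<in> weighted_l2 w \<Longrightarrow> (c i)^2 / w i \<le> (\<Sum>n. (c n)^2 / w n)"
  using sum_le_suminf[OF weighted_l2_summable, of c w "{i}"] by simp

lemma weighted_l2_Fatou:
  assumes w: "\<And>n. 0 \<le> w n" and V: "\<And>m. V m \<in> weighted_l2 w"
    and lim: "\<And>i. (\<lambda>m. V m i) \<longlonglongrightarrow> G i"
    and bound: "\<exists>N. \<forall>m\<ge>N. (\<Sum>i. (V m i)^2 / w i) \<le> e"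
  shows "G \<in> weighted_l2 w" and "(\<Sum>i. (G i)^2 / w i) \<le> e"
proof -
  have nonneg: "0 \<le> (x::real)^2 / w i" for x i
    using w[of i] by simp
  obtain N where N: "\<forall>m\<ge>N. (\<Sum>i. (V m i)^2 / w i) \<le> e"
    using bound by blast
  have partial: "(\<Sum>i<K. (G i)^2 / w i) \<le> e" for K
  proof (rule LIMSEQ_le_const2)
    show "(\<lambda>m. \<Sum>i<K. (V m i)^2 / w i) \<longlonglongrightarrow> (\<Sum>i<K. (G i)^2 / w i)"
      unfolding divide_inverse by (intro tendsto_sum tendsto_mult_right tendsto_power lim)
    have "(\<Sum>i<K. (V m i)^2 / w i) \<le> (\<Sum>i. (V m i)^2 / w i)" for m
      by (rule sum_le_suminf[OF weighted_l2_summable[OF V]]) (auto simp: nonneg)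
    then show "\<exists>N. \<forall>m\<ge>N. (\<Sum>i<K. (V m i)^2 / w i) \<le> e"
      using N order_trans by blast
  qed
  have "G i = 0" if "w i = 0" for i
    using lim[of i] weighted_l2_zero[OF V that] by (simp add: LIMSEQ_const_iff)
  moreover have s: "summable (\<lambda>i. (G i)^2 / w i)"
    by (rule summableI_nonneg_bounded[OF nonneg partial])
  ultimately show "G \<in> weighted_l2 w"
    by (rule weighted_l2I)
  show "(\<Sum>i. (G i)^2 / w i) \<le> e"
    by (rule suminf_le_const[OF s partial])
qed

lemma weighted_l2_Cauchy_convergent:
  assumes w: "\<And>n. 0 \<le> w n" and U: "\<And>k. U k \<in> weighted_l2 w"
    and Cauchy: "\<And>e. e > 0 \<Longrightarrow> \<exists>N. \<forall>m\<ge>N. \<forall>n\<ge>N. (\<Sum>i. (U m i - U n i)^2 / w i) < e"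
  shows "convergent (\<lambda>n. U n i)"
proof (cases "w i = 0")
  case True
  then show ?thesis using weighted_l2_zero[OF U] by (simp add: convergent_const)
next
  case False
  then have "w i > 0" using w[of i] by simp
  have "Cauchy (\<lambda>n. U n i)"
  proof (rule CauchyI)
    fix e :: real assume "0 < e"
    then obtain N where N: "\<forall>m\<ge>N. \<forall>n\<ge>N. (\<Sum>i. (U m i - U n i)^2 / w i) < e^2 / w i"
      using Cauchy[of "e^2 / w i"] \<open>w i > 0\<close> by auto
    have "\<bar>U m i - U n i\<bar> < e" if "N \<le> m" "N \<le> n" for m n
    proof -
      have "(U m i - U n i)^2 / w i < e^2 / w i"
        using N[rule_format, OF that] weighted_l2_term_le[OF w weighted_l2_diff[OF w U[of m] U[of n]], of i]
        by linarith
      then have "\<bar>U m i - U n i\<bar>^2 < e^2"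
        using \<open>w i > 0\<close> by (simp add: divide_less_cancel)
      then show ?thesis using \<open>0 < e\<close> by (simp add: power2_less_imp_less)
    qed
    then show "\<exists>M. \<forall>m\<ge>M. \<forall>n\<ge>M. norm (U m i - U n i) < e" by auto
  qed
  then show ?thesis by (simp add: Cauchy_convergent_iff)
qed

lemma weighted_l2_Cauchy_tail:
  assumes w: "\<And>n. 0 \<le> w n" and U: "\<And>k. U k \<in> weighted_l2 w"
    and Cauchy: "\<And>e. e > 0 \<Longrightarrow> \<exists>N. \<forall>m\<ge>N. \<forall>n\<ge>N. (\<Sum>i. (U m i - U n i)^2 / w i) < e"
    and lim: "\<And>i. (\<lambda>n. U n i) \<longlonglongrightarrow> F i" and "e > 0"
  shows "\<exists>N. \<forall>n\<ge>N. (\<lambda>i. U n i - F i) \<in> weighted_l2 w \<and> (\<Sum>i. (U n i - F i)^2 / w i) \<le> e"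
proof -
  obtain N where N: "\<forall>m\<ge>N. \<forall>n\<ge>N. (\<Sum>i. (U n i - U m i)^2 / w i) < e"
    using Cauchy \<open>e > 0\<close> by blast
  have "(\<lambda>i. U n i - F i) \<in> weighted_l2 w \<and> (\<Sum>i. (U n i - F i)^2 / w i) \<le> e" if "N \<le> n" for n
  proof -
    have lim_n: "(\<lambda>m. U n i - U m i) \<longlonglongrightarrow> U n i - F i" for i
      by (intro tendsto_diff tendsto_const lim)
    have "\<forall>m\<ge>N. (\<Sum>i. (U n i - U m i)^2 / w i) \<le> e"
      using N that by (simp add: less_imp_le)
    then have bound_n: "\<exists>N. \<forall>m\<ge>N. (\<Sum>i. (U n i - U m i)^2 / w i) \<le> e" ..
    from weighted_l2_Fatou[where V="\<lambda>m i. U n i - U m i", OF w weighted_l2_diff[OF w U U] lim_n bound_n]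
    show ?thesis ..
  qed
  then show ?thesis by blast
qed

lemma weighted_l2_complete:
  assumes w: "\<And>n. 0 \<le> w n" and U: "\<And>k. U k \<in> weighted_l2 w"
    and Cauchy: "\<And>e. e > 0 \<Longrightarrow> \<exists>N. \<forall>m\<ge>N. \<forall>n\<ge>N. (\<Sum>i. (U m i - U n i)^2 / w i) < e"
  shows "\<exists>F \<in> weighted_l2 w. (\<lambda>n. \<Sum>i. (U n i - F i)^2 / w i) \<longlonglongrightarrow> 0"
proof -
  define F where "F i = lim (\<lambda>n. U n i)" for i
  have lim: "(\<lambda>n. U n i) \<longlonglongrightarrow> F i" for i
    using weighted_l2_Cauchy_convergent[OF w U Cauchy, of i] unfolding F_def
    by (simp add: convergent_LIMSEQ_iff)
  note tail = weighted_l2_Cauchy_tail[OF w U Cauchy lim]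
  obtain N where "(\<lambda>i. U N i - F i) \<in> weighted_l2 w"
    using tail[of 1] by auto
  from weighted_l2_diff[OF w U[of N] this] have F: "F \<in> weighted_l2 w"
    by simp
  have "(\<lambda>n. \<Sum>i. (U n i - F i)^2 / w i) \<longlonglongrightarrow> 0"
  proof (rule LIMSEQ_I)
    fix r :: real assume "0 < r"
    then obtain N where N: "\<forall>n\<ge>N. (\<lambda>i. U n i - F i) \<in> weighted_l2 w \<and> (\<Sum>i. (U n i - F i)^2 / w i) \<le> r/2"
      using tail[of "r/2"] by auto
    have "norm ((\<Sum>i. (U n i - F i)^2 / w i) - 0) < r" if "N \<le> n" for n
    proof -
      have "0 \<le> (\<Sum>i. (U n i - F i)^2 / w i)"
        using N that w by (intro suminf_nonneg) (auto dest: weighted_l2_summable)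
      then show ?thesis using N[rule_format, OF that] \<open>0 < r\<close> by simp
    qed
    then show "\<exists>N. \<forall>n\<ge>N. norm ((\<Sum>i. (U n i - F i)^2 / w i) - 0) < r"
      by blast
  qed
  then show ?thesis using F by (rule bexI)
qed

section \<open>Expansions in an orthonormal basis\<close>

definition expansion :: "(nat \<Rightarrow> real \<Rightarrow> real) \<Rightarrow> (nat \<Rightarrow> real) \<Rightarrow> real \<Rightarrow> real" where
  "expansion \<phi> c x = (if x \<in> {0..1} then \<Sum>n. c n * \<phi> n x else 0)"

lemma coef_space_iff:
  "f \<in> coef_space \<phi> w \<longleftrightarrow> (\<exists>F\<in>weighted_l2 w.
     (\<forall>x\<in>{0..1}. (\<lambda>i. F i * \<phi> i x) sums f x) \<and> (\<forall>x. x \<notin> {0..1} \<longrightarrow> f x = 0))"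
  unfolding coef_space_def weighted_l2_def by blast

lemma coef_space_mono:
  assumes "weighted_l2 v \<subseteq> weighted_l2 w"
  shows "coef_space \<phi> v \<subseteq> coef_space \<phi> w"
proof
  fix f assume "f \<in> coef_space \<phi> v"
  then obtain F where "F \<in> weighted_l2 v" "\<forall>x\<in>{0..1}. (\<lambda>i. F i * \<phi> i x) sums f x"
    "\<forall>x. x \<notin> {0..1} \<longrightarrow> f x = 0"
    unfolding coef_space_iff by blast
  with assms show "f \<in> coef_space \<phi> w"
    unfolding coef_space_iff by blast
qed

lemma coef_space_eq_expansion:
  assumes "\<And>c x. c \<in> weighted_l2 w \<Longrightarrow> x \<in> {0..1} \<Longrightarrow> summable (\<lambda>n. c n * \<phi> n x)"
  shows "coef_space \<phi> w = expansion \<phi> ` weighted_l2 w"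
proof (intro equalityI subsetI)
  fix f assume "f \<in> coef_space \<phi> w"
  then obtain c where c: "c \<in> weighted_l2 w" and
    sums: "\<And>x. x \<in> {0..1} \<Longrightarrow> (\<lambda>n. c n * \<phi> n x) sums f x" and
    outside: "\<And>x. x \<notin> {0..1} \<Longrightarrow> f x = 0"
    unfolding coef_space_iff by blast
  have "f = expansion \<phi> c"
    by (rule ext) (simp add: expansion_def outside sums_unique[OF sums])
  with c show "f \<in> expansion \<phi> ` weighted_l2 w" by blast
next
  fix f assume "f \<in> expansion \<phi> ` weighted_l2 w"
  then obtain c where c: "c \<in> weighted_l2 w" and f: "f = expansion \<phi> c" by blast
  show "f \<in> coef_space \<phi> w"
    unfolding coef_space_def f
  proof (intro CollectI exI[of _ c] conjI)
    show "\<forall>x\<in>{0..1}. (\<lambda>n. c n * \<phi> n x) sums expansion \<phi> c x"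
      using assms[OF c] by (simp add: expansion_def summable_sums)
  qed (use weighted_l2_zero[OF c] weighted_l2_summable[OF c] in \<open>auto simp: expansion_def\<close>)
qed

locale L2_orthonormal_basis =
  fixes \<phi> :: "nat \<Rightarrow> real \<Rightarrow> real"
  assumes onb: "orthonormal_basis_L2 \<phi>"
begin

lemma basis_L2I: "\<phi> n \<in> L2I"
  and l2_ip_basis: "l2_ip (\<phi> i) (\<phi> j) = (if i = j then 1 else 0)"
  and basis_complete: "f \<in> L2I \<Longrightarrow> (\<And>i. l2_ip f (\<phi> i) = 0) \<Longrightarrow> l2_eq f (\<lambda>_. 0)"
  using onb unfolding orthonormal_basis_L2_def by auto

lemma l2_ip_finite_combination:
  "l2_ip (\<lambda>x. \<Sum>j<N. d j * \<phi> j x) (\<phi> i) = (if i < N then d i else 0)"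
proof -
  have "l2_ip (\<lambda>x. \<Sum>j<N. d j * \<phi> j x) (\<phi> i) = (\<Sum>j<N. d j * l2_ip (\<phi> j) (\<phi> i))"
    by (rule l2_ip_sum[OF basis_L2I basis_L2I])
  also have "\<dots> = (\<Sum>j<N. if j = i then d j else 0)"
    by (intro sum.cong) (auto simp: l2_ip_basis)
  finally show ?thesis by simp
qed

lemma l2_ip_basis_square_le: "g \<in> L2I \<Longrightarrow> (l2_ip g (\<phi> i))^2 \<le> l2_ip g g"
  using l2_Cauchy_Schwarz[OF _ basis_L2I, of g i] by (simp add: l2_ip_basis)

lemma Bessel_inequality:
  assumes f: "f \<in> L2I"
  shows "summable (\<lambda>i. (l2_ip f (\<phi> i))^2)" and "(\<Sum>i. (l2_ip f (\<phi> i))^2) \<le> l2_ip f f"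
proof -
  have partial: "(\<Sum>i<N. (l2_ip f (\<phi> i))^2) \<le> l2_ip f f" for N
  proof -
    define h where "h = (\<lambda>x. \<Sum>i<N. l2_ip f (\<phi> i) * \<phi> i x)"
    define X where "X = (\<Sum>i<N. (l2_ip f (\<phi> i))^2)"
    have h: "h \<in> L2I" unfolding h_def by (rule L2I_sum) (rule basis_L2I)
    have "l2_ip h f = X"
      unfolding h_def X_def
      by (simp add: l2_ip_sum[OF basis_L2I f] l2_ip_commute[of "\<phi> _" f] power2_eq_square)
    moreover have "l2_ip h h = X"
    proof -
      have "l2_ip h h = (\<Sum>i<N. l2_ip f (\<phi> i) * l2_ip (\<phi> i) h)"
        using l2_ip_sum[OF basis_L2I h, where J="{..<N}" and c="\<lambda>i. l2_ip f (\<phi> i)"]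
        by (simp add: h_def)
      also have "\<dots> = X"
        unfolding X_def power2_eq_square using l2_ip_commute[of "\<phi> _" h]
        by (intro sum.cong) (simp_all add: h_def l2_ip_finite_combination)
      finally show ?thesis .
    qed
    moreover have "0 \<le> X" unfolding X_def by (intro sum_nonneg) auto
    ultimately have "X^2 \<le> X * l2_ip f f"
      using l2_Cauchy_Schwarz[OF h f] by simp
    with \<open>0 \<le> X\<close> show ?thesis
      unfolding X_def[symmetric] by (cases "X = 0") (auto simp: power2_eq_square l2_ip_self_nonneg)
  qed
  show s: "summable (\<lambda>i. (l2_ip f (\<phi> i))^2)"
    by (rule summableI_nonneg_bounded[OF _ partial]) simp
  show "(\<Sum>i. (l2_ip f (\<phi> i))^2) \<le> l2_ip f f"
    by (rule suminf_le_const[OF s partial])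
qed

end

locale weighted_basis = L2_orthonormal_basis +
  fixes w :: "nat \<Rightarrow> real"
  assumes weight_nonneg: "\<And>n. 0 \<le> w n" and weight_summable: "summable w"
    and weighted_square_summable: "\<And>x. x \<in> {0..1} \<Longrightarrow> summable (\<lambda>n. w n * (\<phi> n x)^2)"
begin

lemma summable_abs_expansion:
  "c \<in> weighted_l2 w \<Longrightarrow> x \<in> {0..1} \<Longrightarrow> summable (\<lambda>n. \<bar>c n * \<phi> n x\<bar>)"
  using weighted_Cauchy_Schwarz(1)[OF weight_nonneg _ weighted_square_summable] by blast

lemma expansion_sums:
  assumes "c \<in> weighted_l2 w" "x \<in> {0..1}"
  shows "(\<lambda>n. c n * \<phi> n x) sums expansion \<phi> c x"
  using summable_rabs_cancel[OF summable_abs_expansion[OF assms]] assms(2)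
  by (simp add: expansion_def summable_sums)

lemma coef_space_eq: "coef_space \<phi> w = expansion \<phi> ` weighted_l2 w"
  using expansion_sums by (intro coef_space_eq_expansion) (auto dest: sums_summable)

lemma expansion_lin:
  assumes c: "c \<in> weighted_l2 w" and d: "d \<in> weighted_l2 w"
  shows "expansion \<phi> (\<lambda>n. a * c n + b * d n) = (\<lambda>x. a * expansion \<phi> c x + b * expansion \<phi> d x)"
proof
  fix x show "expansion \<phi> (\<lambda>n. a * c n + b * d n) x = a * expansion \<phi> c x + b * expansion \<phi> d x"
  proof (cases "x \<in> {0..1}")
    case True
    have "(\<lambda>n. a * (c n * \<phi> n x) + b * (d n * \<phi> n x)) sums (a * expansion \<phi> c x + b * expansion \<phi> d x)"
      by (intro sums_add sums_mult expansion_sums c d True)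
    then have "(\<lambda>n. (a * c n + b * d n) * \<phi> n x) sums (a * expansion \<phi> c x + b * expansion \<phi> d x)"
      by (simp add: algebra_simps)
    moreover have "(\<lambda>n. (a * c n + b * d n) * \<phi> n x) sums expansion \<phi> (\<lambda>n. a * c n + b * d n) x"
      by (intro expansion_sums weighted_l2_lin weight_nonneg c d True)
    ultimately show ?thesis
      by (simp add: sums_unique2)
  qed (auto simp: expansion_def)
qed

lemma summable_abs_weighted_l2:
  assumes c: "c \<in> weighted_l2 w"
  shows "summable (\<lambda>n. \<bar>c n\<bar>)"
proof -
  have "summable (\<lambda>n. w n * 1^2)" using weight_summable by simp
  from weighted_Cauchy_Schwarz(1)[OF weight_nonneg c this] show ?thesis by simp
qed

lemma basis_measurable [measurable]: "\<phi> n \<in> borel_measurable lborel_01"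
  using basis_L2I by (rule L2I_measurable)

lemma expansion_measurable: "expansion \<phi> c \<in> borel_measurable lborel_01"
proof -
  have "(\<lambda>x. \<Sum>n. c n * \<phi> n x) \<in> borel_measurable lborel_01" by measurable
  then show ?thesis
    by (rule measurable_cong[THEN iffD1, rotated]) (simp add: expansion_def)
qed

lemma integrable_weighted_square_sum: "integrable lborel_01 (\<lambda>x. \<Sum>n. w n * (\<phi> n x)^2)"
proof (rule integrable_suminf)
  show "integrable lborel_01 (\<lambda>x. w n * (\<phi> n x)^2)" for n
    using basis_L2I[of n] by (auto dest: L2I_square_integrable)
  show "AE x in lborel_01. summable (\<lambda>n. norm (w n * (\<phi> n x)^2))"
    using weighted_square_summable weight_nonneg by auto
  have "(\<integral>x. norm (w n * (\<phi> n x)^2) \<partial>lborel_01) = w n" for n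
    using weight_nonneg[of n] l2_ip_basis[of n n]
    by (simp add: l2_ip_integral power2_eq_square)
  then show "summable (\<lambda>n. \<integral>x. norm (w n * (\<phi> n x)^2) \<partial>lborel_01)"
    using weight_summable by simp
qed

lemma expansion_L2I:
  assumes c: "c \<in> weighted_l2 w"
  shows "expansion \<phi> c \<in> L2I"
proof -
  have "integrable lborel_01 (\<lambda>x. (expansion \<phi> c x)^2)"
  proof (rule Bochner_Integration.integrable_bound)
    show "integrable lborel_01 (\<lambda>x. (\<Sum>n. (c n)^2 / w n) * (\<Sum>n. w n * (\<phi> n x)^2))"
      using integrable_weighted_square_sum by simp
    show "(\<lambda>x. (expansion \<phi> c x)^2) \<in> borel_measurable lborel_01"
      using expansion_measurable by measurable
    have "(expansion \<phi> c x)^2 \<le> (\<Sum>n. (c n)^2 / w n) * (\<Sum>n. w n * (\<phi> n x)^2)" if "x \<in> {0..1}" for x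
      using weighted_Cauchy_Schwarz(2)[OF weight_nonneg c weighted_square_summable[OF that]] that
      by (simp add: expansion_def)
    then show "AE x in lborel_01. norm ((expansion \<phi> c x)^2)
        \<le> norm ((\<Sum>n. (c n)^2 / w n) * (\<Sum>n. w n * (\<phi> n x)^2))"
      by (intro AE_I2) (auto intro: order_trans[OF _ abs_ge_self])
  qed
  with expansion_measurable show ?thesis by (simp add: L2I_iff)
qed

lemma l2_ip_expansion_sums:
  assumes c: "c \<in> weighted_l2 w" and g: "g \<in> L2I"
  shows "(\<lambda>n. c n * l2_ip g (\<phi> n)) sums l2_ip (expansion \<phi> c) g"
proof -
  let ?f = "\<lambda>n x. c n * \<phi> n x * g x"
  have "(\<lambda>n. integral\<^sup>L lborel_01 (?f n)) sums (\<integral>x. (\<Sum>n. ?f n x) \<partial>lborel_01)"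
  proof (rule sums_integral)
    show "integrable lborel_01 (?f n)" for n
      using integrable_mult_L2I[OF basis_L2I g] by (simp add: mult.assoc)
    show "AE x in lborel_01. summable (\<lambda>n. norm (?f n x))"
      using summable_mult2[OF summable_abs_expansion[OF c], of _ "\<bar>g _\<bar>"]
      by (intro AE_I2) (simp add: abs_mult)
    have "(\<integral>x. norm (?f n x) \<partial>lborel_01) \<le> \<bar>c n\<bar> * ((1 + l2_ip g g) / 2)" for n
      using integral_abs_mult_le[OF basis_L2I g, of n] l2_ip_basis[of n n]
      by (simp add: abs_mult mult.assoc mult_left_mono)
    then show "summable (\<lambda>n. \<integral>x. norm (?f n x) \<partial>lborel_01)"
      by (intro summable_comparison_test'[OF summable_mult2[OF summable_abs_weighted_l2[OF c],
            of "(1 + l2_ip g g) / 2"]]) (auto intro: integral_nonneg_AE)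
  qed
  moreover have "integral\<^sup>L lborel_01 (?f n) = c n * l2_ip g (\<phi> n)" for n
    by (simp add: l2_ip_integral mult_ac)
  moreover have "(\<integral>x. (\<Sum>n. ?f n x) \<partial>lborel_01) = l2_ip (expansion \<phi> c) g"
    unfolding l2_ip_integral
  proof (rule Bochner_Integration.integral_cong[OF refl])
    fix x assume "x \<in> space lborel_01"
    then have "(\<lambda>n. c n * \<phi> n x) sums expansion \<phi> c x" by (intro expansion_sums c) simp
    from sums_mult2[OF this, of "g x"] show "(\<Sum>n. ?f n x) = expansion \<phi> c x * g x"
      by (simp add: sums_iff)
  qed
  ultimately show ?thesis by simp
qed

lemma l2_ip_expansion:
  "c \<in> weighted_l2 w \<Longrightarrow> g \<in> L2I \<Longrightarrow> l2_ip (expansion \<phi> c) g = (\<Sum>n. c n * l2_ip g (\<phi> n))"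
  using l2_ip_expansion_sums by (simp add: sums_iff)

lemma l2_ip_expansion_basis:
  assumes "c \<in> weighted_l2 w"
  shows "l2_ip (expansion \<phi> c) (\<phi> j) = c j"
proof -
  have "(\<lambda>n. if n = j then c n else 0) sums l2_ip (expansion \<phi> c) (\<phi> j)"
    using l2_ip_expansion_sums[OF assms basis_L2I, of j]
    by (simp add: l2_ip_basis if_distrib eq_commute cong: if_cong)
  with sums_single[of j c] show ?thesis by (simp add: sums_unique2)
qed

lemma l2_eq_expansion:
  assumes u: "u \<in> L2I" and coef: "(\<lambda>j. l2_ip u (\<phi> j)) \<in> weighted_l2 w"
  shows "l2_eq u (expansion \<phi> (\<lambda>j. l2_ip u (\<phi> j)))"
proof -
  let ?v = "expansion \<phi> (\<lambda>j. l2_ip u (\<phi> j))"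
  have v: "?v \<in> L2I" by (rule expansion_L2I[OF coef])
  have "l2_eq (\<lambda>x. u x - ?v x) (\<lambda>_. 0)"
    using L2I_diff[OF u v] l2_ip_diff[OF u v basis_L2I] l2_ip_expansion_basis[OF coef]
    by (intro basis_complete) auto
  then show ?thesis unfolding l2_eq_def by (auto elim!: eventually_mono)
qed

lemma coef_spaceI: "c \<in> weighted_l2 w \<Longrightarrow> expansion \<phi> c \<in> coef_space \<phi> w"
  by (simp add: coef_space_eq)

lemma coef_spaceD:
  assumes "f \<in> coef_space \<phi> w"
  shows "(\<lambda>i. l2_ip f (\<phi> i)) \<in> weighted_l2 w" and "expansion \<phi> (\<lambda>i. l2_ip f (\<phi> i)) = f"
proof -
  obtain c where c: "c \<in> weighted_l2 w" and f: "f = expansion \<phi> c"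
    using assms by (auto simp: coef_space_eq)
  have "(\<lambda>i. l2_ip f (\<phi> i)) = c"
    using l2_ip_expansion_basis[OF c] by (simp add: f)
  with c f show "(\<lambda>i. l2_ip f (\<phi> i)) \<in> weighted_l2 w" "expansion \<phi> (\<lambda>i. l2_ip f (\<phi> i)) = f"
    by simp_all
qed

lemma coef_space_L2I: "f \<in> coef_space \<phi> w \<Longrightarrow> f \<in> L2I"
  by (metis coef_spaceD expansion_L2I)

lemma coef_space_lin:
  assumes f: "f \<in> coef_space \<phi> w" and g: "g \<in> coef_space \<phi> w"
  shows "(\<lambda>x. a * f x + b * g x) \<in> coef_space \<phi> w"
    and "l2_ip (\<lambda>x. a * f x + b * g x) (\<phi> i) = a * l2_ip f (\<phi> i) + b * l2_ip g (\<phi> i)"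
proof -
  note cf = coef_spaceD[OF f] and cg = coef_spaceD[OF g]
  have "(\<lambda>i. a * l2_ip f (\<phi> i) + b * l2_ip g (\<phi> i)) \<in> weighted_l2 w"
    by (rule weighted_l2_lin[OF weight_nonneg cf(1) cg(1)])
  from coef_spaceI[OF this] show "(\<lambda>x. a * f x + b * g x) \<in> coef_space \<phi> w"
    unfolding expansion_lin[OF cf(1) cg(1)] cf(2) cg(2) .
  show "l2_ip (\<lambda>x. a * f x + b * g x) (\<phi> i) = a * l2_ip f (\<phi> i) + b * l2_ip g (\<phi> i)"
    using coef_space_L2I[OF f] coef_space_L2I[OF g] basis_L2I by (rule l2_ip_lin)
qed

lemma coef_space_diff:
  assumes "f \<in> coef_space \<phi> w" "g \<in> coef_space \<phi> w"
  shows "(\<lambda>x. f x - g x) \<in> coef_space \<phi> w"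
    and "l2_ip (\<lambda>x. f x - g x) (\<phi> i) = l2_ip f (\<phi> i) - l2_ip g (\<phi> i)"
  using coef_space_lin[OF assms, of 1 "-1"] by simp_all

lemma coef_ip_self: "coef_ip \<phi> w f f = (\<Sum>i. (l2_ip f (\<phi> i))^2 / w i)"
  by (simp add: coef_ip_def power2_eq_square)

lemma coef_ip_lin:
  assumes f: "f \<in> coef_space \<phi> w" and g: "g \<in> coef_space \<phi> w" and h: "h \<in> coef_space \<phi> w"
  shows "coef_ip \<phi> w (\<lambda>x. a * f x + b * g x) h = a * coef_ip \<phi> w f h + b * coef_ip \<phi> w g h"
proof -
  let ?fh = "\<lambda>i. l2_ip f (\<phi> i) * l2_ip h (\<phi> i) / w i"
  let ?gh = "\<lambda>i. l2_ip g (\<phi> i) * l2_ip h (\<phi> i) / w i"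
  have s: "summable ?fh" "summable ?gh"
    using f g h by (auto intro: summable_weighted_mult weight_nonneg coef_spaceD)
  have "coef_ip \<phi> w (\<lambda>x. a * f x + b * g x) h = (\<Sum>i. a * ?fh i + b * ?gh i)"
    unfolding coef_ip_def coef_space_lin(2)[OF f g] by (simp add: algebra_simps add_divide_distrib)
  also have "\<dots> = (\<Sum>i. a * ?fh i) + (\<Sum>i. b * ?gh i)"
    by (intro suminf_add[symmetric] summable_mult s)
  also have "\<dots> = a * coef_ip \<phi> w f h + b * coef_ip \<phi> w g h"
    unfolding coef_ip_def by (simp only: suminf_mult[OF s(1)] suminf_mult[OF s(2)])
  finally show ?thesis .
qed

lemma coef_ip_self_nonneg: "0 \<le> coef_ip \<phi> w f f" if "f \<in> coef_space \<phi> w"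
  unfolding coef_ip_self using weight_nonneg coef_spaceD(1)[OF that]
  by (intro suminf_nonneg) (auto dest: weighted_l2_summable)

lemma coef_ip_self_eq_0:
  assumes f: "f \<in> coef_space \<phi> w" and "coef_ip \<phi> w f f = 0"
  shows "f = (\<lambda>_. 0)"
proof -
  have "(l2_ip f (\<phi> i))^2 / w i = 0" for i
    using assms(2) suminf_eq_zero_iff[OF weighted_l2_summable[OF coef_spaceD(1)[OF f]]] weight_nonneg
    by (simp add: coef_ip_self)
  then have "(\<lambda>i. l2_ip f (\<phi> i)) = (\<lambda>_. 0)"
    using weighted_l2_zero[OF coef_spaceD(1)[OF f]] by fastforce
  then show ?thesis
    using coef_spaceD(2)[OF f] by (auto simp: expansion_def)
qed

lemma coef_space_complete:
  assumes u: "\<And>n. u n \<in> coef_space \<phi> w"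
    and Cauchy: "\<forall>e>0. \<exists>N. \<forall>m\<ge>N. \<forall>n\<ge>N. coef_ip \<phi> w (\<lambda>x. u m x - u n x) (\<lambda>x. u m x - u n x) < e"
  shows "\<exists>f\<in>coef_space \<phi> w. (\<lambda>n. coef_ip \<phi> w (\<lambda>x. u n x - f x) (\<lambda>x. u n x - f x)) \<longlonglongrightarrow> 0"
proof -
  define U where "U n i = l2_ip (u n) (\<phi> i)" for n i
  have dist: "coef_ip \<phi> w (\<lambda>x. u n x - f x) (\<lambda>x. u n x - f x) = (\<Sum>i. (U n i - l2_ip f (\<phi> i))^2 / w i)"
    if "f \<in> coef_space \<phi> w" for n f
    by (simp add: coef_ip_self coef_space_diff(2)[OF u that] U_def)
  have U: "U n \<in> weighted_l2 w" for n
    unfolding U_def by (rule coef_spaceD(1)[OF u])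
  have dist_U: "coef_ip \<phi> w (\<lambda>x. u m x - u n x) (\<lambda>x. u m x - u n x) = (\<Sum>i. (U m i - U n i)^2 / w i)"
    for m n
    using dist[OF u, of m n] by (simp add: U_def)
  have "\<exists>N. \<forall>m\<ge>N. \<forall>n\<ge>N. (\<Sum>i. (U m i - U n i)^2 / w i) < e" if e: "e > 0" for e
  proof -
    obtain N where "\<forall>m\<ge>N. \<forall>n\<ge>N. coef_ip \<phi> w (\<lambda>x. u m x - u n x) (\<lambda>x. u m x - u n x) < e"
      using Cauchy[rule_format, OF e] ..
    then have "\<forall>m\<ge>N. \<forall>n\<ge>N. (\<Sum>i. (U m i - U n i)^2 / w i) < e"
      by (simp only: dist_U)
    then show ?thesis by blast
  qed
  from weighted_l2_complete[OF weight_nonneg U this] obtain F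
    where F: "F \<in> weighted_l2 w" and lim: "(\<lambda>n. \<Sum>i. (U n i - F i)^2 / w i) \<longlonglongrightarrow> 0" ..
  have "expansion \<phi> F \<in> coef_space \<phi> w"
    by (rule coef_spaceI[OF F])
  moreover have "l2_ip (expansion \<phi> F) (\<phi> i) = F i" for i
    by (rule l2_ip_expansion_basis[OF F])
  ultimately show ?thesis
    using lim by (intro bexI[of _ "expansion \<phi> F"]) (simp_all add: dist)
qed

lemma kernel_section_eq_expansion:
  assumes "x \<in> {0..1}"
  shows "kernel_section {0..1} (mercer_kernel w \<phi>) x = expansion \<phi> (\<lambda>i. w i * \<phi> i x)"
  by (auto simp: kernel_section_def mercer_kernel_def expansion_def mult_ac)

lemma weighted_l2_basis_values: "x \<in> {0..1} \<Longrightarrow> (\<lambda>i. w i * \<phi> i x) \<in> weighted_l2 w"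
  by (simp add: weighted_l2_mult_weight_iff weighted_square_summable)

lemma coef_ip_kernel_section:
  assumes x: "x \<in> {0..1}" and f: "f \<in> coef_space \<phi> w"
  shows "coef_ip \<phi> w f (kernel_section {0..1} (mercer_kernel w \<phi>) x) = f x"
proof -
  have "coef_ip \<phi> w f (kernel_section {0..1} (mercer_kernel w \<phi>) x)
      = (\<Sum>i. l2_ip f (\<phi> i) * (w i * \<phi> i x) / w i)"
    by (simp add: coef_ip_def kernel_section_eq_expansion[OF x]
        l2_ip_expansion_basis[OF weighted_l2_basis_values[OF x]])
  also have "\<dots> = (\<Sum>i. l2_ip f (\<phi> i) * \<phi> i x)"
    using weighted_l2_zero[OF coef_spaceD(1)[OF f]] by (intro suminf_cong) auto
  also have "\<dots> = f x"
    using expansion_sums[OF coef_spaceD(1)[OF f] x] by (simp add: coef_spaceD(2)[OF f] sums_iff)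
  finally show ?thesis .
qed

theorem is_rkhs_coef_space: "is_rkhs {0..1} (mercer_kernel w \<phi>) (coef_space \<phi> w) (coef_ip \<phi> w)"
  unfolding is_rkhs_def
proof (intro conjI ballI allI impI)
  show "f x = 0" if "f \<in> coef_space \<phi> w" "x \<notin> {0..1}" for f x
    using coef_spaceD(2)[OF that(1)] that(2) by (metis expansion_def)
  have "expansion \<phi> (\<lambda>_. 0) = (\<lambda>_. 0)"
    by (simp add: expansion_def fun_eq_iff)
  then show "(\<lambda>_. 0) \<in> coef_space \<phi> w"
    using coef_spaceI[of "\<lambda>_. 0"] by (simp add: weighted_l2_def)
  show "(\<lambda>x. a * f x + b * g x) \<in> coef_space \<phi> w"
    if "f \<in> coef_space \<phi> w" "g \<in> coef_space \<phi> w" for f g a b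
    using that by (rule coef_space_lin)
  show "coef_ip \<phi> w f g = coef_ip \<phi> w g f" for f g
    by (simp add: coef_ip_def mult.commute)
  show "coef_ip \<phi> w (\<lambda>x. a * f x + b * g x) h = a * coef_ip \<phi> w f h + b * coef_ip \<phi> w g h"
    if "f \<in> coef_space \<phi> w" "g \<in> coef_space \<phi> w" "h \<in> coef_space \<phi> w" for f g h a b
    using that by (rule coef_ip_lin)
  show "0 \<le> coef_ip \<phi> w f f" if "f \<in> coef_space \<phi> w" for f
    using that by (rule coef_ip_self_nonneg)
  show "f = (\<lambda>_. 0)" if "f \<in> coef_space \<phi> w" "coef_ip \<phi> w f f = 0" for f
    using that by (rule coef_ip_self_eq_0)
  show "\<exists>f\<in>coef_space \<phi> w. (\<lambda>n. coef_ip \<phi> w (\<lambda>x. u n x - f x) (\<lambda>x. u n x - f x)) \<longlonglongrightarrow> 0"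
    if "(\<forall>n. u n \<in> coef_space \<phi> w) \<and>
      (\<forall>e>0. \<exists>N. \<forall>m\<ge>N. \<forall>n\<ge>N. coef_ip \<phi> w (\<lambda>x. u m x - u n x) (\<lambda>x. u m x - u n x) < e)" for u
    using that coef_space_complete by blast
  show "kernel_section {0..1} (mercer_kernel w \<phi>) x \<in> coef_space \<phi> w" if "x \<in> {0..1}" for x
    using that by (simp add: kernel_section_eq_expansion coef_spaceI weighted_l2_basis_values)
  show "coef_ip \<phi> w f (kernel_section {0..1} (mercer_kernel w \<phi>) x) = f x"
    if "x \<in> {0..1}" "f \<in> coef_space \<phi> w" for x f
    using that by (rule coef_ip_kernel_section)
qed

section \<open>The integral operator and its square roots\<close>

lemma weighted_l2_weighted_coefficients:
  assumes g: "g \<in> L2I"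
  shows "(\<lambda>i. w i * l2_ip g (\<phi> i)) \<in> weighted_l2 w"
  unfolding weighted_l2_mult_weight_iff
proof (rule summable_comparison_test'[OF summable_mult2[OF weight_summable, of "l2_ip g g"]])
  show "norm (w n * (l2_ip g (\<phi> n))^2) \<le> w n * l2_ip g g" for n
    using l2_ip_basis_square_le[OF g, of n] weight_nonneg[of n] by (simp add: mult_left_mono)
qed

lemma integral_op_mercer:
  assumes g: "g \<in> L2I" and x: "x \<in> {0..1}"
  shows "integral_op (mercer_kernel w \<phi>) g x = expansion \<phi> (\<lambda>i. w i * l2_ip g (\<phi> i)) x"
proof -
  have "integral_op (mercer_kernel w \<phi>) g x = l2_ip (expansion \<phi> (\<lambda>i. w i * \<phi> i x)) g"
    unfolding integral_op_def l2_ip_def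
    by (intro set_lebesgue_integral_cong) (auto simp: mercer_kernel_def expansion_def mult_ac)
  also have "\<dots> = expansion \<phi> (\<lambda>i. w i * l2_ip g (\<phi> i)) x"
    using x by (simp add: l2_ip_expansion[OF weighted_l2_basis_values[OF x] g] expansion_def mult_ac)
  finally show ?thesis .
qed

lemma integral_op_mercer_L2I: "g \<in> L2I \<Longrightarrow> integral_op (mercer_kernel w \<phi>) g \<in> L2I"
  using L2I_cong[OF expansion_L2I[OF weighted_l2_weighted_coefficients]] integral_op_mercer
  by metis

lemma l2_ip_integral_op_mercer:
  assumes g: "g \<in> L2I" and h: "h \<in> L2I"
  shows "l2_ip (integral_op (mercer_kernel w \<phi>) g) h = (\<Sum>i. w i * l2_ip g (\<phi> i) * l2_ip h (\<phi> i))"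
  using l2_ip_cong[of "integral_op (mercer_kernel w \<phi>) g"] integral_op_mercer[OF g]
    l2_ip_expansion[OF weighted_l2_weighted_coefficients[OF g] h]
  by simp

lemma weighted_l2_sqrt_coefficients: "g \<in> L2I \<Longrightarrow> (\<lambda>i. sqrt (w i) * l2_ip g (\<phi> i)) \<in> weighted_l2 w"
  by (intro weighted_l2_sqrt_mult weight_nonneg Bessel_inequality)

definition mercer_sqrt :: "(real \<Rightarrow> real) \<Rightarrow> real \<Rightarrow> real" where
  "mercer_sqrt g = expansion \<phi> (\<lambda>i. sqrt (w i) * l2_ip g (\<phi> i))"

lemma mercer_sqrt_L2I: "g \<in> L2I \<Longrightarrow> mercer_sqrt g \<in> L2I"
  unfolding mercer_sqrt_def by (intro expansion_L2I weighted_l2_sqrt_coefficients)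

lemma l2_ip_mercer_sqrt_basis: "g \<in> L2I \<Longrightarrow> l2_ip (mercer_sqrt g) (\<phi> j) = sqrt (w j) * l2_ip g (\<phi> j)"
  unfolding mercer_sqrt_def by (intro l2_ip_expansion_basis weighted_l2_sqrt_coefficients)

lemma l2_ip_mercer_sqrt_sums:
  "f \<in> L2I \<Longrightarrow> g \<in> L2I \<Longrightarrow>
    (\<lambda>n. sqrt (w n) * l2_ip f (\<phi> n) * l2_ip g (\<phi> n)) sums l2_ip (mercer_sqrt f) g"
  unfolding mercer_sqrt_def by (intro l2_ip_expansion_sums weighted_l2_sqrt_coefficients)

lemma mercer_sqrt_cong:
  assumes "f \<in> L2I" "g \<in> L2I" "l2_eq f g"
  shows "mercer_sqrt f = mercer_sqrt g"
  using l2_ip_cong_AE[OF assms(3,1,2) basis_L2I] by (simp add: mercer_sqrt_def)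

lemma mercer_sqrt_lin:
  assumes f: "f \<in> L2I" and g: "g \<in> L2I"
  shows "mercer_sqrt (\<lambda>x. a * f x + b * g x) = (\<lambda>x. a * mercer_sqrt f x + b * mercer_sqrt g x)"
proof -
  have "(\<lambda>i. sqrt (w i) * l2_ip (\<lambda>x. a * f x + b * g x) (\<phi> i))
      = (\<lambda>i. a * (sqrt (w i) * l2_ip f (\<phi> i)) + b * (sqrt (w i) * l2_ip g (\<phi> i)))"
    by (simp add: l2_ip_lin[OF f g basis_L2I] algebra_simps)
  then show ?thesis
    by (simp add: mercer_sqrt_def expansion_lin weighted_l2_sqrt_coefficients f g)
qed

lemma l2_ip_mercer_sqrt_self_le:
  assumes f: "f \<in> L2I"
  shows "l2_ip (mercer_sqrt f) (mercer_sqrt f) \<le> (\<Sum>n. w n) * l2_ip f f"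
proof -
  have "sqrt (w n) * c * (sqrt (w n) * c) = w n * c^2" for n c
  proof -
    have "sqrt (w n) * c * (sqrt (w n) * c) = (sqrt (w n) * sqrt (w n)) * c^2"
      by (simp add: power2_eq_square algebra_simps)
    then show ?thesis using weight_nonneg[of n] by simp
  qed
  then have "l2_ip (mercer_sqrt f) (mercer_sqrt f) = (\<Sum>n. w n * (l2_ip f (\<phi> n))^2)"
    using sums_unique[OF l2_ip_mercer_sqrt_sums[OF f mercer_sqrt_L2I[OF f]]]
    by (simp add: l2_ip_mercer_sqrt_basis[OF f])
  also have "\<dots> \<le> (\<Sum>n. w n * l2_ip f f)"
    using l2_ip_basis_square_le[OF f] weight_nonneg weighted_l2_weighted_coefficients[OF f]
    by (intro suminf_le summable_mult2 weight_summable mult_left_mono)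
      (auto simp: weighted_l2_mult_weight_iff)
  also have "\<dots> = (\<Sum>n. w n) * l2_ip f f"
    using weight_summable by (rule suminf_mult2[symmetric])
  finally show ?thesis .
qed

lemma mercer_sqrt_self_adjoint:
  assumes "f \<in> L2I" "g \<in> L2I"
  shows "l2_ip (mercer_sqrt f) g = l2_ip f (mercer_sqrt g)"
proof -
  have "l2_ip (mercer_sqrt f) g = (\<Sum>n. sqrt (w n) * l2_ip f (\<phi> n) * l2_ip g (\<phi> n))"
    using l2_ip_mercer_sqrt_sums[OF assms] by (rule sums_unique)
  also have "\<dots> = (\<Sum>n. sqrt (w n) * l2_ip g (\<phi> n) * l2_ip f (\<phi> n))"
    by (simp only: mult_ac)
  also have "\<dots> = l2_ip (mercer_sqrt g) f"
    using l2_ip_mercer_sqrt_sums[OF assms(2,1)] by (rule sums_unique[symmetric])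
  finally show ?thesis
    unfolding l2_ip_commute[of f "mercer_sqrt g"] .
qed

lemma mercer_sqrt_nonneg: "f \<in> L2I \<Longrightarrow> 0 \<le> l2_ip (mercer_sqrt f) f"
  using sums_le[OF _ sums_zero l2_ip_mercer_sqrt_sums] by (simp add: weight_nonneg mult.assoc)

lemma mercer_sqrt_mercer_sqrt:
  assumes f: "f \<in> L2I"
  shows "l2_eq (mercer_sqrt (mercer_sqrt f)) (integral_op (mercer_kernel w \<phi>) f)"
proof -
  have "(\<lambda>i. sqrt (w i) * l2_ip (mercer_sqrt f) (\<phi> i)) = (\<lambda>i. w i * l2_ip f (\<phi> i))"
    by (simp add: l2_ip_mercer_sqrt_basis[OF f] weight_nonneg flip: mult.assoc)
  then show ?thesis
    unfolding l2_eq_def by (intro AE_I2) (simp add: mercer_sqrt_def integral_op_mercer[OF f])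
qed

lemma l2_sqrt_of_mercer_sqrt: "l2_sqrt_of (integral_op (mercer_kernel w \<phi>)) mercer_sqrt"
  unfolding l2_sqrt_of_def l2_operator_def
proof (intro conjI ballI allI impI)
  show "l2_eq (mercer_sqrt f) (mercer_sqrt g)" if "f \<in> L2I" "g \<in> L2I" "l2_eq f g" for f g
    using mercer_sqrt_cong[OF that] by (simp add: l2_eq_def)
  show "l2_eq (mercer_sqrt (\<lambda>x. a * f x + b * g x)) (\<lambda>x. a * mercer_sqrt f x + b * mercer_sqrt g x)"
    if "f \<in> L2I" "g \<in> L2I" for f g a b
    using mercer_sqrt_lin[OF that] by (simp add: l2_eq_def)
  show "\<exists>K. \<forall>f\<in>L2I. l2_ip (mercer_sqrt f) (mercer_sqrt f) \<le> K * l2_ip f f"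
    using l2_ip_mercer_sqrt_self_le by blast
qed (fact mercer_sqrt_L2I mercer_sqrt_self_adjoint mercer_sqrt_nonneg mercer_sqrt_mercer_sqrt)+

lemma l2_sqrt_of_l2_sqrt:
  "l2_sqrt_of (integral_op (mercer_kernel w \<phi>)) (l2_sqrt (integral_op (mercer_kernel w \<phi>)))"
  unfolding l2_sqrt_def
  by (rule someI[where P="l2_sqrt_of (integral_op (mercer_kernel w \<phi>))", OF l2_sqrt_of_mercer_sqrt])

lemma l2_sqrt_of_partial_sums_bound:
  assumes S: "l2_sqrt_of (integral_op (mercer_kernel w \<phi>)) S" and f: "f \<in> L2I"
  shows "(\<Sum>j<N. d j * l2_ip (S f) (\<phi> j))^2 \<le> l2_ip f f * (\<Sum>j<N. w j * (d j)^2)"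
proof -
  define v where "v = (\<lambda>x. \<Sum>j<N. d j * \<phi> j x)"
  have v: "v \<in> L2I" unfolding v_def by (rule L2I_sum) (rule basis_L2I)
  note Sv = l2_sqrt_ofD(1)[OF S v]
  have "l2_ip (S f) v = l2_ip v (S f)"
    by (rule l2_ip_commute)
  also have "\<dots> = (\<Sum>j<N. d j * l2_ip (\<phi> j) (S f))"
    unfolding v_def by (rule l2_ip_sum[OF basis_L2I l2_sqrt_ofD(1)[OF S f]])
  finally have "l2_ip (S f) v = (\<Sum>j<N. d j * l2_ip (S f) (\<phi> j))"
    by (simp only: l2_ip_commute[of "\<phi> _" "S f"])
  moreover have "l2_ip (S f) v = l2_ip f (S v)"
    by (rule l2_sqrt_ofD(2)[OF S f v])
  moreover have "l2_ip (S v) (S v) = (\<Sum>j<N. w j * (d j)^2)"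
  proof -
    have "l2_ip (S v) (S v) = l2_ip (S (S v)) v"
      using l2_sqrt_ofD(2)[OF S v Sv] by (simp add: l2_ip_commute)
    also have "\<dots> = l2_ip (integral_op (mercer_kernel w \<phi>) v) v"
      by (rule l2_ip_cong_AE[OF l2_sqrt_ofD(3)[OF S v] l2_sqrt_ofD(1)[OF S Sv] integral_op_mercer_L2I[OF v] v])
    also have "\<dots> = (\<Sum>i. w i * l2_ip v (\<phi> i) * l2_ip v (\<phi> i))"
      by (rule l2_ip_integral_op_mercer[OF v v])
    also have "\<dots> = (\<Sum>i. if i \<in> {..<N} then w i * (d i)^2 else 0)"
      by (intro suminf_cong) (simp add: v_def l2_ip_finite_combination power2_eq_square)
    also have "\<dots> = (\<Sum>j<N. w j * (d j)^2)"
      by (subst suminf_finite[of "{..<N}"]) auto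
    finally show ?thesis .
  qed
  ultimately show ?thesis
    using l2_Cauchy_Schwarz[OF f Sv] by simp
qed

lemma l2_sqrt_of_coefficients_weighted_l2:
  assumes S: "l2_sqrt_of (integral_op (mercer_kernel w \<phi>)) S" and f: "f \<in> L2I"
  shows "(\<lambda>j. l2_ip (S f) (\<phi> j)) \<in> weighted_l2 w"
proof (rule weighted_l2_of_partial_sums_bound[OF weight_nonneg])
  fix N d
  show "(\<Sum>j<N. d j * l2_ip (S f) (\<phi> j))^2 \<le> l2_ip f f * (\<Sum>j<N. w j * (d j)^2)"
    by (rule l2_sqrt_of_partial_sums_bound[OF S f])
qed

end

section \<open>The kernel and the covariance operator\<close>

locale kernel_and_covariance = P: weighted_basis \<phi> a + Q: weighted_basis \<psi> b
  for \<phi> \<psi> :: "nat \<Rightarrow> real \<Rightarrow> real" and a b :: "nat \<Rightarrow> real" +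
  assumes tau_bounded: "bdd_above (range (tau a b \<psi> \<phi>))"
begin

lemma abs_theta_le_1: "\<bar>theta \<psi> \<phi> m i\<bar> \<le> 1"
  using l2_Cauchy_Schwarz[OF Q.basis_L2I P.basis_L2I, of m i]
  by (simp add: theta_def Q.l2_ip_basis P.l2_ip_basis abs_square_le_1)

lemma abs_eta_term_le: "\<bar>b m * theta \<psi> \<phi> m i * theta \<psi> \<phi> m j\<bar> \<le> b m"
proof -
  have "\<bar>theta \<psi> \<phi> m i\<bar> * \<bar>theta \<psi> \<phi> m j\<bar> \<le> 1"
    using abs_theta_le_1 by (intro mult_le_one) auto
  then show ?thesis
    using Q.weight_nonneg[of m] mult_left_mono[of _ 1 "b m"] by (simp add: abs_mult mult.assoc)
qed

lemma abs_eta_le: "\<bar>eta b \<psi> \<phi> i j\<bar> \<le> (\<Sum>m. b m)"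
proof -
  have s: "summable (\<lambda>m. \<bar>b m * theta \<psi> \<phi> m i * theta \<psi> \<phi> m j\<bar>)"
    by (rule summable_comparison_test'[OF Q.weight_summable]) (simp add: abs_eta_term_le)
  have "\<bar>eta b \<psi> \<phi> i j\<bar> \<le> (\<Sum>m. \<bar>b m * theta \<psi> \<phi> m i * theta \<psi> \<phi> m j\<bar>)"
    unfolding eta_def by (rule summable_rabs[OF s])
  also have "\<dots> \<le> (\<Sum>m. b m)"
    by (rule suminf_le[OF abs_eta_term_le s Q.weight_summable])
  finally show ?thesis .
qed

lemma summable_tau_series: "summable (\<lambda>j. a j * (eta b \<psi> \<phi> i j)^2)"
proof (rule summable_comparison_test'[OF summable_mult2[OF P.weight_summable, of "(\<Sum>m. b m)^2"]])
  fix j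
  have "(eta b \<psi> \<phi> i j)^2 \<le> (\<Sum>m. b m)^2"
    using abs_eta_le[of i j] by (metis abs_ge_zero power2_abs power_mono)
  then show "norm (a j * (eta b \<psi> \<phi> i j)^2) \<le> a j * (\<Sum>m. b m)^2"
    using P.weight_nonneg[of j] by (simp add: mult_left_mono)
qed

lemma tau_eq: "tau a b \<psi> \<phi> i = (\<Sum>j. a j * (eta b \<psi> \<phi> i j)^2)"
  unfolding tau_def eta_def by (simp add: mult_ac)

lemma tau_nonneg: "0 \<le> tau a b \<psi> \<phi> i"
  unfolding tau_eq using summable_tau_series P.weight_nonneg by (intro suminf_nonneg) auto

lemma weight_tau_le: obtains M where "\<And>i. a i * tau a b \<psi> \<phi> i \<le> M * a i"
proof -
  from tau_bounded obtain M where M: "\<forall>x\<in>range (tau a b \<psi> \<phi>). x \<le> M"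
    unfolding bdd_above_def by blast
  have "a i * tau a b \<psi> \<phi> i \<le> M * a i" for i
    using mult_left_mono[OF M[rule_format, OF rangeI] P.weight_nonneg, of i] by (simp add: mult.commute)
  then show thesis by (rule that)
qed

lemma weighted_basis_tau: "weighted_basis \<phi> (\<lambda>i. a i * tau a b \<psi> \<phi> i)"
proof -
  obtain M where le: "\<And>i. a i * tau a b \<psi> \<phi> i \<le> M * a i" using weight_tau_le by blast
  show ?thesis
  proof unfold_locales
    show "0 \<le> a n * tau a b \<psi> \<phi> n" for n
      using P.weight_nonneg tau_nonneg by simp
    show "summable (\<lambda>n. a n * tau a b \<psi> \<phi> n)"
      using le P.weight_nonneg tau_nonneg
      by (intro summable_comparison_test'[OF summable_mult[OF P.weight_summable, of M]]) simp
    show "summable (\<lambda>n. a n * tau a b \<psi> \<phi> n * (\<phi> n x)^2)" if "x \<in> {0..1}" for x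
      using le P.weight_nonneg tau_nonneg mult_right_mono[OF le, of "(\<phi> _ x)^2"]
      by (intro summable_comparison_test'[OF summable_mult[OF P.weighted_square_summable[OF that], of M]])
        (simp add: mult_ac)
  qed
qed

lemma coef_space_tau_subset: "coef_space \<phi> (\<lambda>i. a i * tau a b \<psi> \<phi> i) \<subseteq> coef_space \<phi> a"
proof (rule coef_space_mono)
  obtain M where le: "\<And>i. a i * tau a b \<psi> \<phi> i \<le> M * a i" using weight_tau_le by blast
  show "weighted_l2 (\<lambda>i. a i * tau a b \<psi> \<phi> i) \<subseteq> weighted_l2 a"
    using le P.weight_nonneg tau_nonneg by (intro weighted_l2_mono[where K=M]) simp_all
qed

text \<open>Instead of interchanging the sums over \<open>m\<close> and \<open>j\<close>, the series over \<open>m\<close> is read as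
  \<open>\<langle>u, v\<rangle>\<close> with \<open>v\<close> the \<open>\<psi>\<close>-expansion of \<open>b\<^sub>m \<theta>\<^sub>m\<^sub>i\<close>, and \<open>\<langle>u, v\<rangle>\<close> is then expanded
  in the basis \<open>\<phi>\<close>.\<close>
lemma l2_ip_cov_op_basis:
  assumes u: "u \<in> L2I" and coef: "(\<lambda>j. l2_ip u (\<phi> j)) \<in> weighted_l2 a"
  shows "l2_ip (cov_op (mercer_kernel b \<psi>) u) (\<phi> i) = (\<Sum>j. l2_ip u (\<phi> j) * eta b \<psi> \<phi> i j)"
proof -
  let ?c = "\<lambda>m. b m * theta \<psi> \<phi> m i"
  have c: "?c \<in> weighted_l2 b"
    unfolding weighted_l2_mult_weight_iff
    using abs_eta_term_le[of _ i i]
    by (intro summable_comparison_test'[OF Q.weight_summable]) (simp add: power2_eq_square mult.assoc)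
  have "l2_ip (cov_op (mercer_kernel b \<psi>) u) (\<phi> i) = (\<Sum>m. b m * l2_ip u (\<psi> m) * l2_ip (\<phi> i) (\<psi> m))"
    unfolding cov_op_def by (rule Q.l2_ip_integral_op_mercer[OF u P.basis_L2I])
  also have "\<dots> = (\<Sum>m. ?c m * l2_ip u (\<psi> m))"
    by (simp add: theta_def l2_ip_commute[of "\<phi> i"] mult_ac)
  also have "\<dots> = l2_ip (expansion \<psi> ?c) u"
    by (rule Q.l2_ip_expansion[OF c u, symmetric])
  also have "\<dots> = l2_ip (expansion \<phi> (\<lambda>j. l2_ip u (\<phi> j))) (expansion \<psi> ?c)"
    using l2_ip_cong_AE[OF P.l2_eq_expansion[OF u coef] u P.expansion_L2I[OF coef] Q.expansion_L2I[OF c]]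
    by (simp add: l2_ip_commute)
  also have "\<dots> = (\<Sum>j. l2_ip u (\<phi> j) * l2_ip (expansion \<psi> ?c) (\<phi> j))"
    by (rule P.l2_ip_expansion[OF coef Q.expansion_L2I[OF c]])
  also have "\<dots> = (\<Sum>j. l2_ip u (\<phi> j) * eta b \<psi> \<phi> i j)"
  proof (intro suminf_cong)
    fix j
    have "l2_ip (expansion \<psi> ?c) (\<phi> j) = (\<Sum>m. ?c m * l2_ip (\<phi> j) (\<psi> m))"
      by (rule Q.l2_ip_expansion[OF c P.basis_L2I])
    also have "\<dots> = eta b \<psi> \<phi> i j"
      by (simp add: eta_def theta_def l2_ip_commute[of "\<phi> j"] mult_ac)
    finally show "l2_ip u (\<phi> j) * l2_ip (expansion \<psi> ?c) (\<phi> j) = l2_ip u (\<phi> j) * eta b \<psi> \<phi> i j"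
      by simp
  qed
  finally show ?thesis .
qed

lemma cov_op_coefficient_bound:
  assumes u: "u \<in> L2I" and coef: "(\<lambda>j. l2_ip u (\<phi> j)) \<in> weighted_l2 a"
  shows "(l2_ip (cov_op (mercer_kernel b \<psi>) u) (\<phi> i))^2
    \<le> (\<Sum>j. (l2_ip u (\<phi> j))^2 / a j) * tau a b \<psi> \<phi> i"
  unfolding l2_ip_cov_op_basis[OF assms] tau_eq
  by (rule weighted_Cauchy_Schwarz(2)[OF P.weight_nonneg coef summable_tau_series])

lemma range_sqrt_sqrt_cov_sqrt:
  "l2_range_subset
     (\<lambda>f. l2_sqrt (integral_op (mercer_kernel a \<phi>))
            (l2_sqrt (integral_op (mercer_kernel a \<phi>))
               (cov_op (mercer_kernel b \<psi>)
                  (l2_sqrt (integral_op (mercer_kernel a \<phi>)) f))))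
     (coef_space \<phi> (\<lambda>i. a i * tau a b \<psi> \<phi> i))"
  unfolding l2_range_subset_def
proof
  fix f assume f: "f \<in> L2I"
  define S where "S = l2_sqrt (integral_op (mercer_kernel a \<phi>))"
  have S: "l2_sqrt_of (integral_op (mercer_kernel a \<phi>)) S"
    unfolding S_def by (rule P.l2_sqrt_of_l2_sqrt)
  define u where "u = S f"
  have u: "u \<in> L2I" and coef: "(\<lambda>j. l2_ip u (\<phi> j)) \<in> weighted_l2 a"
    unfolding u_def using l2_sqrt_ofD(1)[OF S f] P.l2_sqrt_of_coefficients_weighted_l2[OF S f] .
  define g where "g = cov_op (mercer_kernel b \<psi>) u"
  have g: "g \<in> L2I"
    unfolding g_def cov_op_def by (rule Q.integral_op_mercer_L2I[OF u])
  have "(\<lambda>i. a i * l2_ip g (\<phi> i)) \<in> weighted_l2 (\<lambda>i. a i * tau a b \<psi> \<phi> i)"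
    using cov_op_coefficient_bound[OF u coef] P.weight_nonneg P.weight_summable tau_nonneg
    unfolding g_def by (intro weighted_l2_mult_weight_bounded)
  then have "expansion \<phi> (\<lambda>i. a i * l2_ip g (\<phi> i)) \<in> coef_space \<phi> (\<lambda>i. a i * tau a b \<psi> \<phi> i)"
    by (rule weighted_basis.coef_spaceI[OF weighted_basis_tau])
  moreover have "l2_eq (S (S g)) (expansion \<phi> (\<lambda>i. a i * l2_ip g (\<phi> i)))"
    using l2_sqrt_ofD(3)[OF S g] P.integral_op_mercer[OF g] by (rule l2_eq_trans_on)
  ultimately show "\<exists>h\<in>coef_space \<phi> (\<lambda>i. a i * tau a b \<psi> \<phi> i).
    l2_eq (S (S (cov_op (mercer_kernel b \<psi>) (S f)))) h"
    unfolding g_def u_def by blast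
qed

end

theorem proposition1:
  fixes a b :: "nat \<Rightarrow> real" and \<phi> \<psi> :: "nat \<Rightarrow> real \<Rightarrow> real"
  assumes a_nonneg: "\<forall>i. 0 \<le> a i" and b_nonneg: "\<forall>m. 0 \<le> b m"
    and a_sum: "summable a" and b_sum: "summable b"
    and phi_onb: "orthonormal_basis_L2 \<phi>" and psi_onb: "orthonormal_basis_L2 \<psi>"
    and k_def: "\<forall>x\<in>{0..1}. \<forall>y\<in>{0..1}. summable (\<lambda>i. a i * \<phi> i x * \<phi> i y)"
    and c_def: "\<forall>x\<in>{0..1}. \<forall>y\<in>{0..1}. summable (\<lambda>m. b m * \<psi> m x * \<psi> m y)"
    and tau_bdd: "bdd_above (range (tau a b \<psi> \<phi>))"
  shows "is_rkhs {0..1} (mercer_kernel a \<phi>) (coef_space \<phi> a) (coef_ip \<phi> a) \<and>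
         l2_range_subset
           (\<lambda>f. l2_sqrt (integral_op (mercer_kernel a \<phi>))
                  (l2_sqrt (integral_op (mercer_kernel a \<phi>))
                     (cov_op (mercer_kernel b \<psi>)
                        (l2_sqrt (integral_op (mercer_kernel a \<phi>)) f))))
           (coef_space \<phi> (\<lambda>i. a i * tau a b \<psi> \<phi> i)) \<and>
         coef_space \<phi> (\<lambda>i. a i * tau a b \<psi> \<phi> i) \<subseteq> coef_space \<phi> a \<and>
         is_rkhs {0..1} (mercer_kernel (\<lambda>i. a i * tau a b \<psi> \<phi> i) \<phi>)
           (coef_space \<phi> (\<lambda>i. a i * tau a b \<psi> \<phi> i))
           (coef_ip \<phi> (\<lambda>i. a i * tau a b \<psi> \<phi> i))"
proof -
  have "weighted_basis \<phi> a" "weighted_basis \<psi> b"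
    using a_nonneg b_nonneg a_sum b_sum phi_onb psi_onb k_def c_def
    by (unfold_locales) (auto simp: power2_eq_square mult.assoc)
  then interpret kernel_and_covariance \<phi> \<psi> a b
    using tau_bdd by (intro kernel_and_covariance.intro kernel_and_covariance_axioms.intro)
  show ?thesis
    using P.is_rkhs_coef_space range_sqrt_sqrt_cov_sqrt coef_space_tau_subset
      weighted_basis.is_rkhs_coef_space[OF weighted_basis_tau] by blast
qed

end
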